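(* Let $G$ be a finite simple connected graph. Then $c_{\infty}(G)=1$ if and only if every block of $G$ has domination number one and $G$ has no hallway.
   Context: Cops and Robber with an infinitely fast robber: the game is played on a graph $G$. A set of cops first choose initial vertices (several cops may share a vertex); then the robber, knowing their positions, chooses a vertex. Then the players move in alternating rounds, cops first. In the cops' turn each cop either stays or moves to an adjacent vertex; in the robber's turn she either stays or moves along any path of $G$ starting at her current vertex that contains no vertex currently occupied by a cop. The cops win if at some point a cop moves to the vertex occupied by the robber; otherwise the robber wins. $c_{\infty}(G)$ is the minimum number of cops for which the cops have a strategy that guarantees a win. A block of a connected graph $G$ is either a maximal 2-connected subgraph of $G$ or an edge of $G$ not contained in any 2-connected subgraph. The block tree $B(G)$ is the bipartite graph whose vertices are the blocks and the cut vertices of $G$, a block $B$ and cut vertex $v$ being adjacent iff $v\in V(B)$; it is a tree. A block $B$ has domination number one if some vertex $x\in V(B)$ has every other vertex of $B$ adjacent to $x$. If $u$ is a cut vertex of $G$ and $B$ a block containing $u$ such that $\{u\}$ is not a dominating set of $B$ (some vertex of $B$ is neither $u$ nor adjacent to $u$), then $(B,u)$ is called a directed hole. For two distinct blocks $B,B'$ with unique $(B,B')$-path $B\,u_1\cdots u_k\,B'$ in $B(G)$, the pair $\{B,B'\}$ is a hallway if both $(B,u_1)$ and $(B',u_k)$ are directed holes. *)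

theory Defs
  imports Main
begin

definition simple_graph :: "'a set \<Rightarrow> ('a \<Rightarrow> 'a \<Rightarrow> bool) \<Rightarrow> bool" where
  "simple_graph V E \<longleftrightarrow> finite V \<and> (\<forall>x y. E x y \<longrightarrow> x \<in> V \<and> y \<in> V)
     \<and> (\<forall>x y. E x y \<longrightarrow> E y x) \<and> (\<forall>x. \<not> E x x)"

definition induced :: "('a \<Rightarrow> 'a \<Rightarrow> bool) \<Rightarrow> 'a set \<Rightarrow> 'a \<Rightarrow> 'a \<Rightarrow> bool" where
  "induced E S x y \<longleftrightarrow> E x y \<and> x \<in> S \<and> y \<in> S"

definition connected_on :: "('a \<Rightarrow> 'a \<Rightarrow> bool) \<Rightarrow> 'a set \<Rightarrow> bool" where
  "connected_on E S \<longleftrightarrow> S \<noteq> {} \<and> (\<forall>x\<in>S. \<forall>y\<in>S. (induced E S)\<^sup>*\<^sup>* x y)"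

definition connected_graph :: "'a set \<Rightarrow> ('a \<Rightarrow> 'a \<Rightarrow> bool) \<Rightarrow> bool" where
  "connected_graph V E \<longleftrightarrow> connected_on E V"

definition two_connected_on :: "('a \<Rightarrow> 'a \<Rightarrow> bool) \<Rightarrow> 'a set \<Rightarrow> bool" where
  "two_connected_on E S \<longleftrightarrow> finite S \<and> card S \<ge> 3 \<and> connected_on E S
     \<and> (\<forall>x\<in>S. connected_on E (S - {x}))"

text \<open>Blocks, represented by their vertex sets (a maximal 2-connected subgraph is induced;
a bridge block is the induced subgraph on the two ends of the edge). A 2-connected
subgraph contains the edge uv iff the induced subgraph on its vertex set does.\<close>
definition is_block :: "'a set \<Rightarrow> ('a \<Rightarrow> 'a \<Rightarrow> bool) \<Rightarrow> 'a set \<Rightarrow> bool" where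
  "is_block V E B \<longleftrightarrow>
     (B \<subseteq> V \<and> two_connected_on E B \<and> (\<forall>B'. B \<subset> B' \<and> B' \<subseteq> V \<longrightarrow> \<not> two_connected_on E B'))
   \<or> (\<exists>u v. B = {u, v} \<and> E u v \<and>
        (\<forall>S. S \<subseteq> V \<and> u \<in> S \<and> v \<in> S \<longrightarrow> \<not> two_connected_on E S))"

definition cut_vertex :: "'a set \<Rightarrow> ('a \<Rightarrow> 'a \<Rightarrow> bool) \<Rightarrow> 'a \<Rightarrow> bool" where
  "cut_vertex V E v \<longleftrightarrow> v \<in> V \<and>
     (\<exists>x\<in>V - {v}. \<exists>y\<in>V - {v}. \<not> (induced E (V - {v}))\<^sup>*\<^sup>* x y)"

definition block_tree_adj :: "'a set \<Rightarrow> ('a \<Rightarrow> 'a \<Rightarrow> bool) \<Rightarrow> ('a set + 'a) \<Rightarrow> ('a set + 'a) \<Rightarrow> bool" where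
  "block_tree_adj V E X Y \<longleftrightarrow>
     (\<exists>B v. ((X = Inl B \<and> Y = Inr v) \<or> (X = Inr v \<and> Y = Inl B))
             \<and> is_block V E B \<and> cut_vertex V E v \<and> v \<in> B)"

definition block_tree_path :: "'a set \<Rightarrow> ('a \<Rightarrow> 'a \<Rightarrow> bool) \<Rightarrow> ('a set + 'a) list
     \<Rightarrow> ('a set + 'a) \<Rightarrow> ('a set + 'a) \<Rightarrow> bool" where
  "block_tree_path V E p X Y \<longleftrightarrow> p \<noteq> [] \<and> hd p = X \<and> last p = Y \<and> distinct p
     \<and> successively (block_tree_adj V E) p"

definition dom_number_one :: "('a \<Rightarrow> 'a \<Rightarrow> bool) \<Rightarrow> 'a set \<Rightarrow> bool" where
  "dom_number_one E B \<longleftrightarrow> (\<exists>x\<in>B. \<forall>y\<in>B. y \<noteq> x \<longrightarrow> E x y)"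

definition directed_hole :: "'a set \<Rightarrow> ('a \<Rightarrow> 'a \<Rightarrow> bool) \<Rightarrow> 'a set \<Rightarrow> 'a \<Rightarrow> bool" where
  "directed_hole V E B u \<longleftrightarrow> cut_vertex V E u \<and> is_block V E B \<and> u \<in> B
     \<and> (\<exists>w\<in>B. w \<noteq> u \<and> \<not> E u w)"

definition is_hallway :: "'a set \<Rightarrow> ('a \<Rightarrow> 'a \<Rightarrow> bool) \<Rightarrow> 'a set \<Rightarrow> 'a set \<Rightarrow> bool" where
  "is_hallway V E B B' \<longleftrightarrow> is_block V E B \<and> is_block V E B' \<and> B \<noteq> B' \<and>
     (\<exists>p u1 uk. block_tree_path V E p (Inl B) (Inl B') \<and>
        p ! 1 = Inr u1 \<and> p ! (length p - 2) = Inr uk \<and>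
        directed_hole V E B u1 \<and> directed_hole V E B' uk)"

definition has_hallway :: "'a set \<Rightarrow> ('a \<Rightarrow> 'a \<Rightarrow> bool) \<Rightarrow> bool" where
  "has_hallway V E \<longleftrightarrow> (\<exists>B B'. is_hallway V E B B')"

text \<open>Cop positions of k cops: a function nat \<Rightarrow> 'a, of which indices < k are used.
Each cop stays or moves to an adjacent vertex.\<close>
definition cop_step :: "('a \<Rightarrow> 'a \<Rightarrow> bool) \<Rightarrow> nat \<Rightarrow> (nat \<Rightarrow> 'a) \<Rightarrow> (nat \<Rightarrow> 'a) \<Rightarrow> bool" where
  "cop_step E k c c' \<longleftrightarrow> (\<forall>i<k. c' i = c i \<or> E (c i) (c' i))"

definition robber_step :: "('a \<Rightarrow> 'a \<Rightarrow> bool) \<Rightarrow> 'a set \<Rightarrow> 'a \<Rightarrow> 'a \<Rightarrow> bool" where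
  "robber_step E C r r' \<longleftrightarrow> r' = r \<or> (\<lambda>x y. E x y \<and> x \<notin> C \<and> y \<notin> C)\<^sup>+\<^sup>+ r r'"

text \<open>k cops win: there are initial positions c0 and a strategy sigma (mapping the
history r_0,...,r_{n-1} of robber positions to the cops' positions after round n) such that
against every robber play (r 0 in V, chosen knowing c0), the cops move legally and at some
round n capture the robber (a cop lands on r_{n-1}), unless the robber moved illegally first.\<close>
definition cops_win :: "'a set \<Rightarrow> ('a \<Rightarrow> 'a \<Rightarrow> bool) \<Rightarrow> nat \<Rightarrow> bool" where
  "cops_win V E k \<longleftrightarrow> (\<exists>(c0 :: nat \<Rightarrow> 'a) (\<sigma> :: 'a list \<Rightarrow> nat \<Rightarrow> 'a).
     (\<forall>i<k. c0 i \<in> V) \<and>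
     (\<forall>r :: nat \<Rightarrow> 'a. r 0 \<in> V \<longrightarrow>
        (let c = (\<lambda>n. if n = 0 then c0 else \<sigma> (map r [0..<n])) in
         \<exists>n\<ge>1. (\<forall>m\<in>{1..n}. cop_step E k (c (m - 1)) (c m)) \<and>
               ((\<exists>i<k. c n i = r (n - 1)) \<or>
                \<not> robber_step E (c n ` {..<k}) (r (n - 1)) (r n)))))"

definition c_inf :: "'a set \<Rightarrow> ('a \<Rightarrow> 'a \<Rightarrow> bool) \<Rightarrow> nat" where
  "c_inf V E = (LEAST k. cops_win V E k)"

end

theory Submission
  imports Defs
begin

text \<open>
  The robber survives if some block B has no dominating vertex: B minus the cop's vertex stays
  connected and always contains a vertex neither occupied by nor adjacent to the cop. She also
  survives on a hallway {B, B'} with holes (B, u) and (B', u'), waiting at a vertex w of B not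
  adjacent to u or at a vertex w' of B' not adjacent to u'. The component S of G - u containing w
  and the component S' of G - u' containing w' are disjoint, and the cop can enter S only from u,
  at which moment the robber escapes through u to w'; symmetrically for S'.

  Conversely, let the cop stand at v with the robber in the component D of G - v, and let B be the
  block at v leading to D. If v dominates B, the cop steps to the gate of B for the robber, and D
  shrinks. Otherwise she steps to the vertex x dominating B and then to the gate g; again D shrinks
  unless g = v, in which case (B, v) is a directed hole. As there is no hallway, every block beyond
  v is then dominated by the vertex through which v sees it, so that from now on the first strategy
  alone succeeds. Induction on |D| completes the proof.
\<close>

lemma successively_take: "successively R xs \<Longrightarrow> successively R (take n xs)"
  using successively_append_iff[of R "take n xs" "drop n xs"] by simp

lemma successively_drop: "successively R xs \<Longrightarrow> successively R (drop n xs)"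
  using successively_append_iff[of R "take n xs" "drop n xs"] by simp

lemma rtranclp_imp_distinct_path:
  assumes "R\<^sup>*\<^sup>* x y"
  obtains xs where "xs \<noteq> []" "hd xs = x" "last xs = y" "distinct xs" "successively R xs"
proof -
  from assms have "\<exists>xs. xs \<noteq> [] \<and> hd xs = x \<and> last xs = y \<and> distinct xs \<and> successively R xs"
  proof (induction rule: rtranclp_induct)
    case base
    show ?case by (intro exI[of _ "[x]"]) auto
  next
    case (step y z)
    then obtain xs where xs: "xs \<noteq> []" "hd xs = x" "last xs = y" "distinct xs" "successively R xs"
      by blast
    show ?case
    proof (cases "z \<in> set xs")
      case True
      then obtain i where i: "i < length xs" "xs ! i = z" by (metis in_set_conv_nth)
      then have "last (take (Suc i) xs) = z" by (simp add: take_Suc_conv_app_nth)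
      with xs successively_take show ?thesis by (intro exI[of _ "take (Suc i) xs"]) auto
    next
      case False
      with xs step(2) show ?thesis
        by (intro exI[of _ "xs @ [z]"]) (auto simp: successively_append_iff)
    qed
  qed
  then show thesis using that by blast
qed

lemma successively_in_set_hd_or_pred: "successively R xs \<Longrightarrow> x \<in> set xs \<Longrightarrow> x = hd xs \<or> (\<exists>y. R y x)"
proof (induction xs)
  case (Cons a xs)
  then show ?case by (cases xs) (auto simp: successively_Cons)
qed simp

lemma course_of_values_sequence:
  obtains r :: "nat \<Rightarrow> 'a" where "r 0 = a" "\<And>n. r (Suc n) = f (map r [0..<Suc n])"
proof -
  define h :: "nat \<Rightarrow> 'a list" where "h n = rec_nat [a] (\<lambda>_ xs. xs @ [f xs]) n" for n
  have h_simps: "h 0 = [a]" "h (Suc n) = h n @ [f (h n)]" for n by (simp_all add: h_def)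
  have length_h: "length (h n) = Suc n" for n by (induction n) (simp_all add: h_simps)
  have h_nth: "h n ! i = h i ! i" if "i \<le> n" for i n
    using that
  proof (induction n)
    case (Suc n)
    then show ?case
      by (cases "i = Suc n") (simp_all add: h_simps nth_append length_h)
  qed simp
  define r where "r i = h i ! i" for i
  have h_eq: "h n = map r [0..<Suc n]" for n
  proof (rule nth_equalityI)
    fix i assume "i < length (h n)"
    then have "i < Suc n" by (simp add: length_h)
    then have "map r [0..<Suc n] ! i = r i" by (simp only: nth_map_upt add_0)
    moreover have "h n ! i = r i" unfolding r_def using \<open>i < Suc n\<close> by (intro h_nth) simp
    ultimately show "h n ! i = map r [0..<Suc n] ! i" by simp
  qed (simp add: length_h)
  have "r (Suc n) = f (h n)" for n
    using length_h[of n] by (simp add: r_def h_simps nth_append)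
  then have "r (Suc n) = f (map r [0..<Suc n])" for n
    by (simp only: h_eq)
  moreover have "r 0 = a" by (simp add: r_def h_simps)
  ultimately show thesis using that by blast
qed

lemma successively_last_invariant:
  "successively R xs \<Longrightarrow> xs \<noteq> [] \<Longrightarrow> P (hd xs) \<Longrightarrow>
    (\<And>x y. R x y \<Longrightarrow> x \<in> set xs \<Longrightarrow> P x \<Longrightarrow> P y) \<Longrightarrow> P (last xs)"
proof (induction xs)
  case (Cons a xs)
  then show ?case by (cases xs) (auto simp: successively_Cons)
qed simp

section \<open>Reachability inside vertex sets\<close>

locale finite_graph =
  fixes V :: "'a set" and E :: "'a \<Rightarrow> 'a \<Rightarrow> bool"
  assumes finite_V: "finite V"
    and edge_in_V: "E x y \<Longrightarrow> x \<in> V \<and> y \<in> V"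
    and edge_sym: "E x y \<Longrightarrow> E y x"
    and edge_irrefl: "\<not> E x x"
begin

abbreviation reach :: "'a set \<Rightarrow> 'a \<Rightarrow> 'a \<Rightarrow> bool" where
  "reach S \<equiv> (induced E S)\<^sup>*\<^sup>*"

definition component :: "'a set \<Rightarrow> 'a \<Rightarrow> 'a set" where
  "component S x = {y. reach S x y}"

lemma induced_sym: "induced E S x y \<Longrightarrow> induced E S y x"
  by (auto simp: induced_def edge_sym)

lemma reach_sym: "reach S x y \<Longrightarrow> reach S y x"
proof (induction rule: rtranclp_induct)
  case (step y z)
  then show ?case by (metis converse_rtranclp_into_rtranclp induced_sym)
qed simp

lemma reach_trans: "reach S x y \<Longrightarrow> reach S y z \<Longrightarrow> reach S x z"
  by (rule rtranclp_trans)

lemma reach_mono: "reach S x y \<Longrightarrow> S \<subseteq> T \<Longrightarrow> reach T x y"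
  by (erule mono_rtranclp[rule_format, rotated]) (auto simp: induced_def)

lemma reach_edge: "E x y \<Longrightarrow> x \<in> S \<Longrightarrow> y \<in> S \<Longrightarrow> reach S x y"
  by (auto simp: induced_def)

lemma reach_in: "reach S x y \<Longrightarrow> x \<noteq> y \<Longrightarrow> x \<in> S \<and> y \<in> S"
proof (induction rule: rtranclp_induct)
  case (step y z)
  then show ?case by (cases "x = y") (auto simp: induced_def)
qed simp

lemma reach_in_set: "reach S x y \<Longrightarrow> x \<in> S \<Longrightarrow> y \<in> S"
  using reach_in by blast

lemma reach_closed:
  assumes "reach S x y" "x \<in> Z" "\<And>u v. u \<in> Z \<Longrightarrow> induced E S u v \<Longrightarrow> v \<in> Z"
  shows "y \<in> Z"
  using assms(1) by (induction rule: rtranclp_induct) (auto intro: assms(2,3))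

lemma component_self: "x \<in> component S x"
  by (simp add: component_def)

lemma component_eq: "y \<in> component S x \<Longrightarrow> component S y = component S x"
  unfolding component_def using reach_sym reach_trans by blast

lemma component_subset: "x \<in> S \<Longrightarrow> component S x \<subseteq> S"
  unfolding component_def using reach_in_set by blast

lemma component_disjoint: "y \<notin> component S x \<Longrightarrow> component S x \<inter> component S y = {}"
  unfolding component_def using reach_sym reach_trans by blast

lemma component_finite: "S \<subseteq> V \<Longrightarrow> finite (component S x)"
proof -
  assume "S \<subseteq> V"
  then have "finite (insert x S)" using finite_V finite_subset by blast
  moreover have "component S x \<subseteq> insert x S"
    using reach_in by (auto simp: component_def)
  ultimately show ?thesis by (rule finite_subset[rotated])
qed

lemma component_edge:
  "x \<in> component S w \<Longrightarrow> E x y \<Longrightarrow> y \<in> S \<Longrightarrow> w \<in> S \<Longrightarrow> y \<in> component S w"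
proof -
  assume x: "x \<in> component S w" and "E x y" "y \<in> S" "w \<in> S"
  then have "reach S x y" using component_subset reach_edge by blast
  with x show ?thesis unfolding component_def by (simp add: reach_trans)
qed

lemma reach_within_component: "reach S x y \<Longrightarrow> reach (S \<inter> component S x) x y"
proof (induction rule: rtranclp_induct)
  case (step y z)
  then have "y \<in> component S x" "z \<in> component S x"
    by (auto simp: component_def intro: rtranclp.rtrancl_into_rtrancl)
  with step show ?case
    by (auto simp: induced_def intro: rtranclp.rtrancl_into_rtrancl)
qed simp

lemma reach_restrict: "reach S x y \<Longrightarrow> component S x \<inter> S \<subseteq> T \<Longrightarrow> reach T x y"
  using reach_mono reach_within_component by (metis inf_commute)

lemma connected_onI:
  "S \<noteq> {} \<Longrightarrow> (\<And>x y. x \<in> S \<Longrightarrow> y \<in> S \<Longrightarrow> reach S x y) \<Longrightarrow> connected_on E S"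
  by (simp add: connected_on_def)

lemma connected_on_component: "connected_on E (component S x)"
proof (rule connected_onI)
  fix y z assume y: "y \<in> component S x" and z: "z \<in> component S x"
  then have "reach S y z" unfolding component_def using reach_sym reach_trans by blast
  then have "reach (S \<inter> component S y) y z" by (rule reach_within_component)
  then show "reach (component S x) y z" using reach_mono component_eq[OF y] by blast
qed (use component_self in blast)

lemma connected_subset_component:
  assumes "connected_on E T" "T \<subseteq> S" "z \<in> T" "z \<in> component S x"
  shows "T \<subseteq> component S x"
proof
  fix y assume "y \<in> T"
  then have "reach T z y" using assms(1,3) by (auto simp: connected_on_def)
  then have "reach S z y" using assms(2) reach_mono by blast
  then show "y \<in> component S x" using assms(4) unfolding component_def using reach_trans by blast
qed

lemma connected_on_Un:
  assumes X: "connected_on E X" and Y: "connected_on E Y"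
    and touch: "X \<inter> Y \<noteq> {} \<or> (\<exists>x\<in>X. \<exists>y\<in>Y. E x y)"
  shows "connected_on E (X \<union> Y)"
proof -
  obtain x0 y0 where x0: "x0 \<in> X" "y0 \<in> Y" "reach (X \<union> Y) x0 y0"
    using touch reach_edge by blast
  have inX: "reach (X \<union> Y) a b" if "a \<in> X" "b \<in> X" for a b
    using that X reach_mono[of X a b] by (auto simp: connected_on_def)
  have inY: "reach (X \<union> Y) a b" if "a \<in> Y" "b \<in> Y" for a b
    using that Y reach_mono[of Y a b] by (auto simp: connected_on_def)
  have to_x0: "reach (X \<union> Y) a x0" if "a \<in> X \<union> Y" for a
  proof (cases "a \<in> X")
    case False
    then have "reach (X \<union> Y) a y0" using that inY x0 by blast
    then show ?thesis using x0(3) reach_sym reach_trans by metis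
  qed (use inX x0 in blast)
  show ?thesis
  proof (rule connected_onI)
    show "X \<union> Y \<noteq> {}" using x0 by blast
  next
    fix a b assume "a \<in> X \<union> Y" "b \<in> X \<union> Y"
    then show "reach (X \<union> Y) a b" using to_x0 reach_sym reach_trans by metis
  qed
qed

lemma connected_on_singleton: "connected_on E {x}"
  by (simp add: connected_on_def)

lemma connected_on_path: "xs \<noteq> [] \<Longrightarrow> successively E xs \<Longrightarrow> connected_on E (set xs)"
proof (induction xs)
  case (Cons a xs)
  show ?case
  proof (cases "xs = []")
    case False
    with Cons have "connected_on E (set xs)" "E a (hd xs)" "hd xs \<in> set xs"
      by (auto simp: successively_Cons)
    then show ?thesis
      using connected_on_Un[OF connected_on_singleton, of "set xs" a] by auto
  qed (simp add: connected_on_singleton)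
qed simp

lemma connected_on_Un_path:
  assumes "connected_on E X" "xs \<noteq> []" "successively E xs" "x \<in> X" "y \<in> set xs" "E x y"
  shows "connected_on E (X \<union> set xs)"
  using assms connected_on_Un connected_on_path by blast

lemma reach_first_entry:
  assumes "reach S x y" "x \<notin> B" "y \<in> B"
  shows "\<exists>b\<in>B \<inter> S. \<exists>q. reach (S - B) x q \<and> E q b"
  using assms
proof (induction rule: converse_rtranclp_induct)
  case (step x x')
  then have "x \<in> S" "E x x'" "x' \<in> S" by (auto simp: induced_def)
  show ?case
  proof (cases "x' \<in> B")
    case False
    with step obtain b q where b: "b \<in> B \<inter> S" "reach (S - B) x' q" "E q b" by blast
    have "reach (S - B) x x'"
      using \<open>E x x'\<close> \<open>x \<in> S\<close> \<open>x' \<in> S\<close> False step.prems(1) by (simp add: reach_edge)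
    with b show ?thesis using reach_trans by blast
  next
    case True
    have "reach (S - B) x x" by simp
    then show ?thesis using True \<open>x' \<in> S\<close> \<open>E x x'\<close> by blast
  qed
qed simp

section \<open>Blocks\<close>

text \<open>Unlike two_connected_on, this includes single edges, so that the blocks of the graph are
  exactly its maximal nonseparable vertex sets.\<close>

definition nonseparable :: "'a set \<Rightarrow> bool" where
  "nonseparable S \<longleftrightarrow> connected_on E S \<and> (\<forall>z\<in>S. connected_on E (S - {z}))"

definition block :: "'a set \<Rightarrow> bool" where
  "block B \<longleftrightarrow> B \<subseteq> V \<and> nonseparable B \<and> (\<forall>S. S \<subseteq> V \<longrightarrow> B \<subseteq> S \<longrightarrow> nonseparable S \<longrightarrow> S = B)"

lemma nonseparable_remove: "nonseparable S \<Longrightarrow> connected_on E (S - {z})"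
  unfolding nonseparable_def by (cases "z \<in> S") auto

lemma nonseparable_connected: "nonseparable S \<Longrightarrow> connected_on E S"
  unfolding nonseparable_def by auto

lemma nonseparable_other_vertex: "nonseparable S \<Longrightarrow> x \<in> S \<Longrightarrow> \<exists>y\<in>S. y \<noteq> x"
  using nonseparable_remove[of S x] by (auto simp: connected_on_def)

lemma nonseparable_neighbour:
  assumes "nonseparable S" "x \<in> S"
  shows "\<exists>y\<in>S. E x y"
proof -
  obtain y where y: "y \<in> S" "y \<noteq> x" using nonseparable_other_vertex assms by blast
  have "reach S x y" using assms y nonseparable_connected by (auto simp: connected_on_def)
  then show ?thesis using y(2)
    by (induction rule: converse_rtranclp_induct) (auto simp: induced_def)
qed

lemma connected_on_pair_edge: "connected_on E {u, v} \<Longrightarrow> u \<noteq> v \<Longrightarrow> E u v"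
proof -
  assume "connected_on E {u, v}" "u \<noteq> v"
  then have "reach {u, v} u v" by (auto simp: connected_on_def)
  then show ?thesis using \<open>u \<noteq> v\<close>
    by (induction rule: converse_rtranclp_induct) (auto simp: induced_def edge_irrefl dest: edge_sym)
qed

lemma two_connected_on_iff:
  "two_connected_on E S \<longleftrightarrow> finite S \<and> card S \<ge> 3 \<and> nonseparable S"
  unfolding two_connected_on_def nonseparable_def by auto

lemma nonseparable_edge: "E u v \<Longrightarrow> nonseparable {u, v}"
  using edge_sym edge_irrefl[of u]
  by (auto simp: nonseparable_def connected_on_def induced_def insert_Diff_if)

lemma block_if_is_block:
  assumes "is_block V E B"
  shows "block B"
proof -
  have card_le: "card B \<le> card S" "finite S" if "S \<subseteq> V" "B \<subseteq> S" for S
    using that finite_V finite_subset card_mono by blast+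
  from assms consider (big) "B \<subseteq> V" "two_connected_on E B"
      "\<forall>B'. B \<subset> B' \<and> B' \<subseteq> V \<longrightarrow> \<not> two_connected_on E B'"
    | (edge) u v where "B = {u, v}" "E u v"
      "\<forall>S. S \<subseteq> V \<and> u \<in> S \<and> v \<in> S \<longrightarrow> \<not> two_connected_on E S"
    unfolding is_block_def by blast
  then show ?thesis
  proof cases
    case big
    have "S = B" if S: "S \<subseteq> V" "B \<subseteq> S" "nonseparable S" for S
    proof (rule ccontr)
      assume "S \<noteq> B"
      with S big(2) card_le[OF S(1,2)] have "two_connected_on E S" unfolding two_connected_on_iff by simp
      with big(3) S \<open>S \<noteq> B\<close> show False by blast
    qed
    with big show ?thesis unfolding block_def two_connected_on_iff by blast
  next
    case edge
    have "card B = 2" using edge edge_irrefl by (auto simp: card_insert_if)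
    have "S = B" if S: "S \<subseteq> V" "B \<subseteq> S" "nonseparable S" for S
    proof (rule ccontr)
      assume "S \<noteq> B"
      with S card_le[OF S(1,2)] have "card B < card S" by (simp add: psubset_card_mono)
      with \<open>card B = 2\<close> S(3) card_le[OF S(1,2)] have "two_connected_on E S"
        unfolding two_connected_on_iff by simp
      with edge S show False by blast
    qed
    with edge edge_in_V nonseparable_edge show ?thesis unfolding block_def by auto
  qed
qed

lemma is_block_if_block:
  assumes "block B"
  shows "is_block V E B"
proof -
  from assms have BV: "B \<subseteq> V" and ns: "nonseparable B"
    and max: "\<And>S. S \<subseteq> V \<Longrightarrow> B \<subseteq> S \<Longrightarrow> nonseparable S \<Longrightarrow> S = B"
    unfolding block_def by auto
  have fin: "finite B" using BV finite_V finite_subset by blast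
  obtain x where x: "x \<in> B" using ns unfolding nonseparable_def connected_on_def by blast
  obtain y where y: "y \<in> B" "y \<noteq> x" using nonseparable_other_vertex[OF ns x] by blast
  show ?thesis
  proof (cases "card B \<ge> 3")
    case True
    then show ?thesis
      using ns fin BV max unfolding is_block_def two_connected_on_iff by blast
  next
    case False
    have "card {x, y} \<le> card B" using x y fin by (intro card_mono) auto
    with False y have "card B = 2" by auto
    moreover have "{x, y} \<subseteq> B" "card {x, y} = 2" using x y by auto
    ultimately have B: "B = {x, y}" using card_subset_eq[OF fin] by metis
    then have "E x y" using connected_on_pair_edge nonseparable_connected[OF ns] y by simp
    moreover have "\<not> two_connected_on E S" if "S \<subseteq> V" "x \<in> S" "y \<in> S" for S
      using that max[of S] B \<open>card B = 2\<close> unfolding two_connected_on_iff by force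
    ultimately show ?thesis unfolding is_block_def using B by blast
  qed
qed

lemma is_block_iff_block: "is_block V E B \<longleftrightarrow> block B"
  using block_if_is_block is_block_if_block by blast

lemma block_subset: "block B \<Longrightarrow> B \<subseteq> V"
  and block_nonseparable: "block B \<Longrightarrow> nonseparable B"
  and block_maximal: "block B \<Longrightarrow> S \<subseteq> V \<Longrightarrow> B \<subseteq> S \<Longrightarrow> nonseparable S \<Longrightarrow> S = B"
  by (simp_all add: block_def)

lemma block_nonempty: "block B \<Longrightarrow> \<exists>b. b \<in> B"
  using block_nonseparable nonseparable_connected by (fastforce simp: connected_on_def)

lemma block_remove_reach:
  "block B \<Longrightarrow> x \<in> B \<Longrightarrow> y \<in> B \<Longrightarrow> x \<noteq> z \<Longrightarrow> y \<noteq> z \<Longrightarrow> reach (B - {z}) x y"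
  using nonseparable_remove[OF block_nonseparable] by (auto simp: connected_on_def)

lemma edge_in_block:
  assumes "E u v"
  obtains B where "block B" "u \<in> B" "v \<in> B"
proof -
  define F where "F = {S. S \<subseteq> V \<and> nonseparable S \<and> {u, v} \<subseteq> S}"
  have "finite F" unfolding F_def using finite_V by simp
  moreover have "{u, v} \<in> F" unfolding F_def using assms nonseparable_edge edge_in_V by simp
  ultimately obtain M where M: "M \<in> F" "\<forall>S\<in>F. M \<subseteq> S \<longrightarrow> M = S"
    using finite_has_maximal by blast
  then have "block M" unfolding block_def F_def by auto
  with M that show thesis unfolding F_def by blast
qed

lemma nonseparable_Un:
  assumes "nonseparable X" "nonseparable Y" "x \<in> X" "x \<in> Y" "y \<in> X" "y \<in> Y" "x \<noteq> y"
  shows "nonseparable (X \<union> Y)"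
  unfolding nonseparable_def
proof (intro conjI ballI)
  show "connected_on E (X \<union> Y)" using assms connected_on_Un nonseparable_connected by blast
next
  fix z
  have "X \<union> Y - {z} = (X - {z}) \<union> (Y - {z})" "(X - {z}) \<inter> (Y - {z}) \<noteq> {}"
    using assms by blast+
  then show "connected_on E (X \<union> Y - {z})"
    using connected_on_Un nonseparable_remove assms by metis
qed

lemma block_eq_if_two_common:
  assumes "block B" "block C" "x \<in> B" "x \<in> C" "y \<in> B" "y \<in> C" "x \<noteq> y"
  shows "B = C"
proof -
  have "nonseparable (B \<union> C)" using nonseparable_Un assms block_nonseparable by blast
  moreover have "B \<union> C \<subseteq> V" using assms block_subset by blast
  ultimately have "B \<union> C = B" "B \<union> C = C" using block_maximal assms by blast+
  then show ?thesis by blast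
qed

lemma nonseparable_insert:
  assumes "nonseparable X" "c \<notin> X" "x1 \<in> X" "x2 \<in> X" "x1 \<noteq> x2" "E c x1" "E c x2"
  shows "nonseparable (insert c X)"
  unfolding nonseparable_def
proof (intro conjI ballI)
  show "connected_on E (insert c X)"
    using connected_on_Un[OF nonseparable_connected[OF assms(1)] connected_on_singleton] assms edge_sym
    by auto
next
  fix z assume "z \<in> insert c X"
  show "connected_on E (insert c X - {z})"
  proof (cases "z = c")
    case False
    then have "insert c X - {z} = (X - {z}) \<union> {c}" using assms by blast
    moreover have "\<exists>a\<in>X - {z}. \<exists>b\<in>{c}. E a b" using assms edge_sym by (cases "z = x1") auto
    ultimately show ?thesis
      using connected_on_Un[OF nonseparable_remove[OF assms(1)] connected_on_singleton] by metis
  qed (use assms nonseparable_connected in auto)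
qed

lemma block_outside_neighbour_unique:
  assumes "block B" "c \<notin> B" "x1 \<in> B" "x2 \<in> B" "E c x1" "E c x2"
  shows "x1 = x2"
proof (rule ccontr)
  assume "x1 \<noteq> x2"
  then have "nonseparable (insert c B)"
    using nonseparable_insert assms block_nonseparable by blast
  moreover have "insert c B \<subseteq> V" using assms block_subset edge_in_V by blast
  ultimately show False using block_maximal assms by blast
qed

lemma nonseparable_Un_path:
  assumes ns: "nonseparable B" and xs: "xs \<noteq> []" "distinct xs" "successively E xs"
    and out: "set xs \<inter> B = {}"
    and x: "x1 \<in> B" "x2 \<in> B" "x1 \<noteq> x2" and e: "E (hd xs) x1" "E (last xs) x2"
  shows "nonseparable (B \<union> set xs)"
  unfolding nonseparable_def
proof (intro conjI ballI)
  have ends: "hd xs \<in> set xs" "last xs \<in> set xs" using xs(1) by simp_all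
  show "connected_on E (B \<union> set xs)"
    using connected_on_Un_path[OF nonseparable_connected[OF ns] xs(1,3) x(1) ends(1)] e edge_sym
    by blast
  fix z assume "z \<in> B \<union> set xs"
  show "connected_on E (B \<union> set xs - {z})"
  proof (cases "z \<in> set xs")
    case False
    then have "B \<union> set xs - {z} = (B - {z}) \<union> set xs" by blast
    moreover have "\<exists>a\<in>B - {z}. E a (hd xs) \<or> E a (last xs)" using x e edge_sym False ends by blast
    ultimately show ?thesis
      using connected_on_Un_path[OF nonseparable_remove[OF ns] xs(1,3)] ends by metis
  next
    case True
    then obtain i where i: "i < length xs" "xs ! i = z" by (metis in_set_conv_nth)
    define A C where "A = take i xs" and "C = drop (Suc i) xs"
    have xs_split: "xs = A @ z # C" unfolding A_def C_def using id_take_nth_drop[OF i(1)] i(2) by simp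
    have "z \<notin> B" using True out by blast
    then have eq: "B \<union> set xs - {z} = (B \<union> set A) \<union> set C"
      using xs(2) unfolding xs_split by auto
    have BA: "connected_on E (B \<union> set A)"
    proof (cases "A = []")
      case False
      then have "hd A = hd xs" unfolding xs_split by simp
      then show ?thesis using connected_on_Un_path[OF nonseparable_connected[OF ns] False] False
          successively_take[OF xs(3)] x e edge_sym unfolding A_def by (metis hd_in_set)
    qed (simp add: nonseparable_connected[OF ns])
    show ?thesis
    proof (cases "C = []")
      case False
      then have "last C = last xs" unfolding xs_split by simp
      then show ?thesis
        unfolding eq using connected_on_Un_path[OF BA False] False successively_drop[OF xs(3)]
          x e edge_sym unfolding C_def by (metis UnI1 last_in_set)
    qed (simp add: eq BA)
  qed
qed

lemma block_no_external_path:
  assumes B: "block B" and Q: "Q \<subseteq> V - B" "connected_on E Q"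
    and q: "q1 \<in> Q" "q2 \<in> Q" and x: "x1 \<in> B" "x2 \<in> B" "x1 \<noteq> x2" and e: "E q1 x1" "E q2 x2"
  shows False
proof -
  have "reach Q q1 q2" using Q q by (simp add: connected_on_def)
  then obtain xs where xs: "xs \<noteq> []" "hd xs = q1" "last xs = q2" "distinct xs"
    "successively (induced E Q) xs" by (rule rtranclp_imp_distinct_path)
  have PQ: "set xs \<subseteq> Q"
    using successively_in_set_hd_or_pred[OF xs(5)] xs(2) q(1) by (auto simp: induced_def)
  have "successively E xs" using xs(5) by (rule successively_mono) (simp add: induced_def)
  then have "nonseparable (B \<union> set xs)"
    using nonseparable_Un_path[OF block_nonseparable[OF B] xs(1,4) _ _ x] PQ Q(1) e xs(2,3) by blast
  moreover have "B \<union> set xs \<subseteq> V" using B block_subset PQ Q by blast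
  ultimately have "B \<union> set xs = B" using block_maximal B by blast
  then show False using xs(1,2) PQ Q q by (metis Un_iff Diff_iff hd_in_set subset_iff)
qed

end

section \<open>Gates and the block tree\<close>

lemma block_tree_adj_Inl_Inr:
  "block_tree_adj V E (Inl B) (Inr v) \<longleftrightarrow> is_block V E B \<and> cut_vertex V E v \<and> v \<in> B"
  and block_tree_adj_Inr_Inl:
  "block_tree_adj V E (Inr v) (Inl B) \<longleftrightarrow> is_block V E B \<and> cut_vertex V E v \<and> v \<in> B"
  and block_tree_adj_commute: "block_tree_adj V E X Y \<Longrightarrow> block_tree_adj V E Y X"
  unfolding block_tree_adj_def by blast+

lemma block_tree_path_rev:
  assumes "block_tree_path V E p X Y"
  shows "block_tree_path V E (rev p) Y X"
proof -
  have "successively (block_tree_adj V E) p" using assms by (simp add: block_tree_path_def)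
  then have "successively (\<lambda>x y. block_tree_adj V E y x) p"
    by (rule successively_mono) (rule block_tree_adj_commute)
  then show ?thesis using assms by (auto simp: block_tree_path_def hd_rev last_rev)
qed

definition node_vertices :: "'a set + 'a \<Rightarrow> 'a set" where
  "node_vertices X = (case X of Inl B \<Rightarrow> B | Inr v \<Rightarrow> {v})"

context finite_graph
begin

lemma block_component_disjoint:
  assumes B: "block B" and C: "block C" and BC: "B \<noteq> C" and u: "u \<in> B" "u \<in> C"
    and w: "w \<in> B" "w \<noteq> u"
  shows "C \<inter> component (V - {u}) w = {}"
proof (rule ccontr)
  assume "C \<inter> component (V - {u}) w \<noteq> {}"
  then obtain c where c: "c \<in> C" "reach (V - {u}) w c" by (auto simp: component_def)
  have cu: "c \<noteq> u" using reach_in[OF c(2)] w by blast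
  have cB: "c \<notin> B" using block_eq_if_two_common[OF B C u _ c(1) cu[symmetric]] BC by blast
  define Q where "Q = component (V - B) c"
  have cQ: "c \<in> V - B" using c C block_subset cB by blast
  have Q: "connected_on E Q" "Q \<subseteq> V - B"
    unfolding Q_def using connected_on_component component_subset[OF cQ] by auto
  have "C - {u} \<subseteq> V - B"
    using block_eq_if_two_common[OF B C u] BC C block_subset by blast
  then have CQ: "C - {u} \<subseteq> Q" unfolding Q_def
    using connected_subset_component[OF nonseparable_remove[OF block_nonseparable[OF C]]]
      c cu component_self by blast
  obtain y where y: "y \<in> C" "E u y" using nonseparable_neighbour[OF block_nonseparable[OF C] u(2)]
    by blast
  then have yQ: "y \<in> Q" using CQ edge_irrefl by blast
  from reach_first_entry[OF reach_sym[OF c(2)] cB w(1)] obtain b' q'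
    where b': "b' \<in> B" "b' \<noteq> u" "reach (V - {u} - B) c q'" "E q' b'" by blast
  have "q' \<in> Q" unfolding Q_def component_def using reach_mono[OF b'(3)] by blast
  then show False using block_no_external_path[OF B Q(2,1) yQ, of q' u b'] u b' y edge_sym
    by blast
qed

lemma cut_vertex_if_two_blocks:
  assumes B: "block B" and C: "block C" and BC: "B \<noteq> C" and u: "u \<in> B" "u \<in> C"
  shows "cut_vertex V E u"
proof -
  obtain w where w: "w \<in> B" "w \<noteq> u" using nonseparable_other_vertex[OF block_nonseparable[OF B] u(1)]
    by blast
  obtain c where c: "c \<in> C" "c \<noteq> u" using nonseparable_other_vertex[OF block_nonseparable[OF C] u(2)]
    by blast
  have "\<not> reach (V - {u}) w c"
    using block_component_disjoint[OF B C BC u w] c by (auto simp: component_def)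
  moreover have "w \<in> V - {u}" "c \<in> V - {u}" "u \<in> V" using w c u B C block_subset by blast+
  ultimately show ?thesis unfolding cut_vertex_def by blast
qed

lemma block_tree_path_from_block:
  assumes p: "block_tree_path V E p (Inl B) (Inl B')" and BB': "B \<noteq> B'" and p1: "p ! 1 = Inr u"
  obtains C q where "p = Inl B # Inr u # Inl C # q" "block C" "u \<in> C"
proof -
  have "p \<noteq> []" "hd p = Inl B" "last p = Inl B'" using p unfolding block_tree_path_def by auto
  then obtain p1 where p_eq: "p = Inl B # p1" by (cases p) auto
  with BB' \<open>last p = Inl B'\<close> have "p1 \<noteq> []" by auto
  with p_eq obtain p2 where "p1 = Inr u # p2" using p1 by (cases p1) auto
  moreover have "p2 \<noteq> []" using p unfolding block_tree_path_def p_eq calculation by auto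
  ultimately obtain Y q where p_eq': "p = Inl B # Inr u # Y # q" using p_eq by (cases p2) auto
  then have "block_tree_adj V E (Inr u) Y" using p unfolding block_tree_path_def by simp
  then obtain C where "Y = Inl C" "block C" "u \<in> C"
    unfolding block_tree_adj_def is_block_iff_block by blast
  with p_eq' that show thesis by blast
qed

lemma block_tree_path_separates:
  assumes B: "block B" and BB': "B \<noteq> B'" and p: "block_tree_path V E p (Inl B) (Inl B')"
    and p1: "p ! 1 = Inr u" and w: "w \<in> B" "w \<noteq> u"
  shows "B' \<inter> component (V - {u}) w = {}"
proof -
  define S where "S = component (V - {u}) w"
  obtain C q where p_eq: "p = Inl B # Inr u # Inl C # q" and C: "block C" "u \<in> C"
    using block_tree_path_from_block[OF p BB' p1] .
  have uB: "u \<in> B"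
    using p unfolding p_eq block_tree_path_def by (simp add: block_tree_adj_Inl_Inr)
  have "distinct p" using p by (simp add: block_tree_path_def)
  then have "C \<noteq> B" unfolding p_eq by auto
  then have start: "node_vertices (Inl C) \<inter> S = {}"
    unfolding S_def node_vertices_def using block_component_disjoint[OF B C(1) _ uB C(2) w] by simp
  have "w \<in> V - {u}" using w B block_subset by blast
  then have SV: "S \<subseteq> V - {u}" unfolding S_def by (rule component_subset)
  have step: "node_vertices Y \<inter> S = {}"
    if "block_tree_adj V E X Y" "X \<noteq> Inr u" "node_vertices X \<inter> S = {}" for X Y
  proof -
    from that(1) obtain D x where D: "block D" "x \<in> D"
      "(X = Inl D \<and> Y = Inr x) \<or> (X = Inr x \<and> Y = Inl D)"
      unfolding block_tree_adj_def is_block_iff_block by blast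
    from D(3) show ?thesis
    proof
      assume XY: "X = Inr x \<and> Y = Inl D"
      then have "x \<notin> S" "x \<noteq> u" using that(2,3) by (auto simp: node_vertices_def)
      have "d \<notin> S" if "d \<in> D" for d
      proof
        assume "d \<in> S"
        then have "reach (D - {u}) d x" using block_remove_reach[OF D(1) that D(2)] SV \<open>x \<noteq> u\<close>
          by blast
        moreover have "D - {u} \<subseteq> V - {u}" using D(1) block_subset by blast
        ultimately have "reach (V - {u}) d x" by (rule reach_mono)
        with \<open>d \<in> S\<close> have "x \<in> S" unfolding S_def component_def using reach_trans by blast
        with \<open>x \<notin> S\<close> show False ..
      qed
      then show ?thesis using XY by (auto simp: node_vertices_def)
    qed (use that(3) D(2) in \<open>auto simp: node_vertices_def\<close>)
  qed
  have path: "successively (block_tree_adj V E) (Inl C # q)" and u_notin: "Inr u \<notin> set (Inl C # q)"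
    using p unfolding p_eq block_tree_path_def by (simp_all add: successively_Cons)
  have "node_vertices (last (Inl C # q)) \<inter> S = {}"
  proof (rule successively_last_invariant[OF path])
    fix X Y assume "block_tree_adj V E X Y" "X \<in> set (Inl C # q)" "node_vertices X \<inter> S = {}"
    moreover from this(2) u_notin have "X \<noteq> Inr u" by blast
    ultimately show "node_vertices Y \<inter> S = {}" using step by blast
  qed (simp_all add: start)
  moreover have "last (Inl C # q) = Inl B'" using p unfolding p_eq block_tree_path_def by simp
  ultimately show ?thesis unfolding S_def node_vertices_def by simp
qed

end

locale connected_finite_graph = finite_graph +
  assumes connected: "x \<in> V \<Longrightarrow> y \<in> V \<Longrightarrow> reach V x y"
begin

text \<open>Two distinct entry points into B would give a path outside B between two of its vertices.\<close>

lemma block_gate: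
  assumes B: "block B" and r: "r \<in> V" "r \<notin> B"
  obtains g where "g \<in> B" "reach (V - (B - {g})) r g" "component (V - {g}) r \<inter> B = {}"
proof -
  obtain b0 where "b0 \<in> B" using block_nonempty B by blast
  then have "reach V r b0" using connected r B block_subset by blast
  from reach_first_entry[OF this r(2) \<open>b0 \<in> B\<close>] obtain g q
    where g: "g \<in> B" "reach (V - B) r q" "E q g" by blast
  define Q where "Q = component (V - B) r"
  have rQ: "r \<in> V - B" using r by blast
  have Q: "Q \<subseteq> V - B" "connected_on E Q" "q \<in> Q"
    unfolding Q_def using component_subset[OF rQ] connected_on_component g(2)
    by (simp_all add: component_def)
  have "q \<in> V - (B - {g})" "g \<in> V - (B - {g})" using Q g(1) B block_subset by auto
  then have "reach (V - (B - {g})) q g" by (rule reach_edge[OF g(3)])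
  moreover have "V - B \<subseteq> V - (B - {g})" by blast
  then have "reach (V - (B - {g})) r q" by (rule reach_mono[OF g(2)])
  ultimately have gate: "reach (V - (B - {g})) r g" using reach_trans by blast
  have "component (V - {g}) r \<inter> B = {}"
  proof (rule ccontr)
    assume "component (V - {g}) r \<inter> B \<noteq> {}"
    then obtain b where b: "b \<in> B" "reach (V - {g}) r b" by (auto simp: component_def)
    from reach_first_entry[OF b(2) r(2) b(1)] obtain b' q'
      where b': "b' \<in> B" "b' \<noteq> g" "reach (V - {g} - B) r q'" "E q' b'" by blast
    have "V - {g} - B \<subseteq> V - B" by blast
    with b'(3) have "q' \<in> Q" unfolding Q_def component_def by (simp add: reach_mono)
    then show False
      using block_no_external_path[OF B Q(1,2) Q(3) _ g(1) b'(1) b'(2)[symmetric] g(3) b'(4)] by blast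
  qed
  with g(1) gate that show thesis by blast
qed

end

section \<open>Games with one cop\<close>

lemma cops_win_card: "finite V \<Longrightarrow> cops_win V E (card V)"
proof -
  assume "finite V"
  then obtain h where h: "bij_betw h {0..<card V} V" using ex_bij_betw_nat_finite by blast
  then have img: "h ` {0..<card V} = V" by (rule bij_betw_imp_surj_on)
  then have hV: "\<forall>i<card V. h i \<in> V" by auto
  have onto: "\<exists>i<card V. h i = x" if "x \<in> V" for x
    using that img by (metis atLeastLessThan_iff imageE)
  show ?thesis
    unfolding cops_win_def Let_def
    by (intro exI[of _ h] exI[of _ "\<lambda>_. h"] conjI hV allI impI exI[of _ 1])
      (auto simp: cop_step_def dest: onto)
qed

lemma not_cops_win_0:
  assumes "v \<in> V"
  shows "\<not> cops_win V E 0"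
proof
  assume "cops_win V E 0"
  then obtain c0 :: "nat \<Rightarrow> 'a" and \<sigma> where
    "\<forall>r :: nat \<Rightarrow> 'a. r 0 \<in> V \<longrightarrow> (let c = (\<lambda>n. if n = 0 then c0 else \<sigma> (map r [0..<n])) in
       \<exists>n\<ge>1. (\<forall>m\<in>{1..n}. cop_step E 0 (c (m - 1)) (c m)) \<and>
         ((\<exists>i<0. c n i = r (n - 1)) \<or> \<not> robber_step E (c n ` {..<0}) (r (n - 1)) (r n)))"
    unfolding cops_win_def by blast
  from this[rule_format, of "\<lambda>_. v"] assms show False
    by (simp add: Let_def robber_step_def)
qed

lemma c_inf_eq_1_iff:
  assumes "finite V" "v \<in> V"
  shows "c_inf V E = 1 \<longleftrightarrow> cops_win V E 1"
proof -
  have "cops_win V E (LEAST k. cops_win V E k)"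
    using cops_win_card[OF assms(1)] by (rule LeastI)
  moreover have "(LEAST k. cops_win V E k) = 1" if "cops_win V E 1"
  proof (rule Least_equality)
    fix k assume "cops_win V E k"
    with not_cops_win_0[OF assms(2)] show "1 \<le> k" by (cases k) auto
  qed (fact that)
  ultimately show ?thesis unfolding c_inf_def by auto
qed

context finite_graph
begin

lemma robber_step_singleton_iff: "robber_step E {g} r r' \<longleftrightarrow> reach (V - {g}) r r'"
proof -
  have rel: "(\<lambda>x y. E x y \<and> x \<notin> {g} \<and> y \<notin> {g}) = induced E (V - {g})"
    by (auto simp: fun_eq_iff induced_def dest: edge_in_V)
  show ?thesis
    unfolding robber_step_def rel by (auto dest: rtranclpD intro: tranclp_into_rtranclp)
qed

text \<open>The robber's play is built from the cop strategy by course-of-values recursion on the history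
  of her positions.\<close>

lemma not_cops_win_1_if_robber_invariant:
  fixes Inv :: "'a \<Rightarrow> 'a \<Rightarrow> bool"
  assumes start: "\<And>c. c \<in> V \<Longrightarrow> \<exists>r. Inv c r"
    and safe: "\<And>c r. Inv c r \<Longrightarrow> c \<noteq> r \<and> \<not> E c r"
    and respond: "\<And>c r c'. Inv c r \<Longrightarrow> c' = c \<or> E c c' \<Longrightarrow> \<exists>r'. reach (V - {c'}) r r' \<and> Inv c' r'"
    and in_V: "\<And>c r. Inv c r \<Longrightarrow> r \<in> V"
  shows "\<not> cops_win V E 1"
proof
  assume "cops_win V E 1"
  then obtain c0 :: "nat \<Rightarrow> 'a" and \<sigma> where c0V: "c0 0 \<in> V" and
    W: "\<forall>r :: nat \<Rightarrow> 'a. r 0 \<in> V \<longrightarrow>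
        (let c = (\<lambda>n. if n = 0 then c0 else \<sigma> (map r [0..<n])) in
         \<exists>n\<ge>1. (\<forall>m\<in>{1..n}. cop_step E 1 (c (m - 1)) (c m)) \<and>
               ((\<exists>i<1. c n i = r (n - 1)) \<or> \<not> robber_step E (c n ` {..<1}) (r (n - 1)) (r n)))"
    unfolding cops_win_def by blast
  define cop where "cop h = (if h = [] then c0 0 else \<sigma> h 0)" for h
  define answer where "answer c c' x = (if (c' = c \<or> E c c') \<and> Inv c x
      then (SOME x'. reach (V - {c'}) x x' \<and> Inv c' x') else x)" for c c' x
  obtain r where r0: "r 0 = (SOME x. Inv (c0 0) x)"
    and rSuc: "\<And>n. r (Suc n) =
      answer (cop (butlast (map r [0..<Suc n]))) (cop (map r [0..<Suc n])) (last (map r [0..<Suc n]))"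
    using course_of_values_sequence[where a = "SOME x. Inv (c0 0) x"
          and f = "\<lambda>h. answer (cop (butlast h)) (cop h) (last h)"] by blast
  define c where "c = (\<lambda>n. if n = 0 then c0 else \<sigma> (map r [0..<n]))"
  have c_cop: "c n 0 = cop (map r [0..<n])" for n
    unfolding c_def cop_def by (cases n) auto
  have r_answer: "r (Suc n) = answer (c n 0) (c (Suc n) 0) (r n)" for n
    using rSuc[of n] by (simp add: c_cop del: upt_Suc) (simp add: c_cop)
  have inv: "Inv (c n 0) (r n) \<and> (n \<ge> 1 \<longrightarrow> reach (V - {c n 0}) (r (n - 1)) (r n))"
    if "\<forall>m\<in>{1..n}. cop_step E 1 (c (m - 1)) (c m)" for n
    using that
  proof (induction n)
    case 0
    have "Inv (c0 0) (r 0)" unfolding r0 using start[OF c0V] by (rule someI_ex)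
    then show ?case by (simp add: c_def)
  next
    case (Suc n)
    then have I: "Inv (c n 0) (r n)" by auto
    have "cop_step E 1 (c n) (c (Suc n))" using Suc.prems by force
    then have "c (Suc n) 0 = c n 0 \<or> E (c n 0) (c (Suc n) 0)" by (simp add: cop_step_def)
    with I have "r (Suc n) = (SOME x'. reach (V - {c (Suc n) 0}) (r n) x' \<and> Inv (c (Suc n) 0) x')"
      and "\<exists>x'. reach (V - {c (Suc n) 0}) (r n) x' \<and> Inv (c (Suc n) 0) x'"
      using respond by (auto simp: r_answer answer_def)
    then show ?case by (metis (no_types, lifting) diff_Suc_1 someI_ex)
  qed
  have "r 0 \<in> V" using inv[of 0] in_V by simp
  from W[rule_format, of r, OF this] obtain n where n: "n \<ge> 1" "\<forall>m\<in>{1..n}. cop_step E 1 (c (m - 1)) (c m)"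
    "(\<exists>i<1. c n i = r (n - 1)) \<or> \<not> robber_step E (c n ` {..<1}) (r (n - 1)) (r n)"
    unfolding Let_def c_def[symmetric] by blast
  then obtain m where m: "n = Suc m" by (cases n) auto
  with n(2) have "Inv (c m 0) (r m)" using inv[of m] by auto
  moreover have "cop_step E 1 (c m) (c n)" using n(1,2) m by force
  then have "c n 0 = c m 0 \<or> E (c m 0) (c n 0)" by (simp add: cop_step_def)
  ultimately have "c n 0 \<noteq> r (n - 1)" using safe m by auto
  moreover have "robber_step E {c n 0} (r (n - 1)) (r n)"
    using inv[OF n(2)] n(1) by (simp add: robber_step_singleton_iff)
  moreover have "c n ` {..<1} = {c n 0}" by auto
  ultimately show False using n(3) by auto
qed

end

context finite_graph
begin

text \<open>Positions (v, r) with the cop at v to move and the robber at r from which one cop forces a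
  capture; the robber answers a move to v' by running within G - v'.\<close>

inductive cop_wins_at :: "'a \<Rightarrow> 'a \<Rightarrow> bool" where
  capture: "v = r \<or> E v r \<Longrightarrow> cop_wins_at v r"
| move: "E v v' \<Longrightarrow> v' \<noteq> r \<Longrightarrow> (\<And>r'. reach (V - {v'}) r r' \<Longrightarrow> cop_wins_at v' r') \<Longrightarrow>
    cop_wins_at v r"

fun cop_wins_within :: "nat \<Rightarrow> 'a \<Rightarrow> 'a \<Rightarrow> bool" where
  "cop_wins_within 0 v r \<longleftrightarrow> v = r \<or> E v r"
| "cop_wins_within (Suc n) v r \<longleftrightarrow> cop_wins_within n v r \<or>
    (\<exists>v'. E v v' \<and> v' \<noteq> r \<and> (\<forall>r'. reach (V - {v'}) r r' \<longrightarrow> cop_wins_within n v' r'))"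

lemma cop_wins_within_mono: "cop_wins_within m v r \<Longrightarrow> m \<le> n \<Longrightarrow> cop_wins_within n v r"
proof (induction n arbitrary: v r)
  case (Suc n)
  then show ?case by (cases "m = Suc n") simp_all
qed simp

text \<open>Finiteness of the graph bounds the number of rounds needed uniformly over the robber's
  finitely many answers.\<close>

lemma cop_wins_at_within: "cop_wins_at v r \<Longrightarrow> \<exists>n. cop_wins_within n v r"
proof (induction rule: cop_wins_at.induct)
  case (capture v r)
  then have "cop_wins_within 0 v r" by simp
  then show ?case ..
next
  case (move v v' r)
  define A where "A = {r'. reach (V - {v'}) r r'}"
  have "A \<subseteq> insert r V"
  proof
    fix x assume "x \<in> A"
    then have "reach (V - {v'}) r x" by (simp add: A_def)
    from reach_in[OF this] show "x \<in> insert r V" by blast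
  qed
  then have "finite A" using finite_V finite_subset by blast
  have "\<forall>x\<in>A. \<exists>n. cop_wins_within n v' x" using move.IH unfolding A_def by blast
  from bchoice[OF this] obtain g where g: "\<forall>x\<in>A. cop_wins_within (g x) v' x" by blast
  have "cop_wins_within (Max (g ` A)) v' x" if "x \<in> A" for x
  proof (rule cop_wins_within_mono)
    show "cop_wins_within (g x) v' x" using g that by blast
    show "g x \<le> Max (g ` A)" using \<open>finite A\<close> that by simp
  qed
  then have "cop_wins_within (Suc (Max (g ` A))) v r" using move.hyps unfolding A_def by auto
  then show ?case ..
qed

definition capture_time :: "'a \<Rightarrow> 'a \<Rightarrow> nat" where
  "capture_time v r = (LEAST n. cop_wins_within n v r)"

definition cop_move :: "'a \<Rightarrow> 'a \<Rightarrow> 'a" where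
  "cop_move v r = (if v = r \<or> E v r then r else
     (SOME v'. E v v' \<and> v' \<noteq> r \<and>
       (\<forall>r'. reach (V - {v'}) r r' \<longrightarrow> cop_wins_within (capture_time v r - 1) v' r')))"

lemma cop_move_spec:
  assumes "cop_wins_within n v r" "\<not> (v = r \<or> E v r)"
  shows "E v (cop_move v r)" "cop_move v r \<noteq> r"
    "reach (V - {cop_move v r}) r r' \<Longrightarrow>
      cop_wins_within (capture_time (cop_move v r) r') (cop_move v r) r' \<and>
      capture_time (cop_move v r) r' < capture_time v r"
proof -
  have k: "cop_wins_within (capture_time v r) v r"
    unfolding capture_time_def using assms(1) by (rule LeastI)
  with assms(2) have "capture_time v r \<noteq> 0" by (cases "capture_time v r") auto
  then obtain j where j: "capture_time v r = Suc j" using not0_implies_Suc by blast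
  have "\<not> cop_wins_within j v r"
  proof
    assume "cop_wins_within j v r"
    then have "capture_time v r \<le> j" unfolding capture_time_def by (rule Least_le)
    with j show False by simp
  qed
  let ?P = "\<lambda>v'. E v v' \<and> v' \<noteq> r \<and> (\<forall>r'. reach (V - {v'}) r r' \<longrightarrow> cop_wins_within j v' r')"
  have "\<exists>v'. ?P v'" using k j \<open>\<not> cop_wins_within j v r\<close> by simp
  then have "?P (SOME v'. ?P v')" by (rule someI_ex)
  moreover have "cop_move v r = (SOME v'. ?P v')" unfolding cop_move_def using assms(2) j by simp
  ultimately have move: "?P (cop_move v r)" by simp
  then show "E v (cop_move v r)" "cop_move v r \<noteq> r" by blast+
  assume "reach (V - {cop_move v r}) r r'"
  then have within: "cop_wins_within j (cop_move v r) r'"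
    using move[THEN conjunct2, THEN conjunct2, rule_format] by blast
  have "cop_wins_within (capture_time (cop_move v r) r') (cop_move v r) r'"
    unfolding capture_time_def using within by (rule LeastI)
  moreover have "capture_time (cop_move v r) r' \<le> j"
    unfolding capture_time_def using within by (rule Least_le)
  ultimately show "cop_wins_within (capture_time (cop_move v r) r') (cop_move v r) r' \<and>
      capture_time (cop_move v r) r' < capture_time v r" using j by simp
qed

text \<open>The cop plays cop_move at every round; the capture time strictly decreases until capture.\<close>

lemma cops_win_1_if_cop_wins_at:
  assumes c0: "c0 \<in> V" and wins: "\<And>r. r \<in> V \<Longrightarrow> cop_wins_at c0 r"
  shows "cops_win V E 1"
  unfolding cops_win_def
proof (intro exI[of _ "\<lambda>_. c0"] exI[of _ "\<lambda>h _. foldl cop_move c0 h"] conjI allI impI)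
  fix i :: nat assume "i < 1" then show "c0 \<in> V" using c0 by simp
next
  fix r :: "nat \<Rightarrow> 'a" assume r0: "r 0 \<in> V"
  define C where "C m = foldl cop_move c0 (map r [0..<m])" for m
  define c where "c = (\<lambda>n::nat. if n = 0 then (\<lambda>_::nat. c0) else (\<lambda>_. C n))"
  have c_C: "c m = (\<lambda>_. C m)" for m unfolding c_def C_def by (cases m) auto
  have C_Suc: "C (Suc m) = cop_move (C m) (r m)" for m unfolding C_def by simp
  have img: "c n ` {..<1} = {C n}" for n by (auto simp: c_C)
  let ?ends = "\<exists>n\<ge>1. (\<forall>i\<in>{1..n}. cop_step E 1 (c (i - 1)) (c i)) \<and>
        ((\<exists>i<1. c n i = r (n - 1)) \<or> \<not> robber_step E (c n ` {..<1}) (r (n - 1)) (r n))"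
  have ?ends
    if "capture_time (C m) (r m) = k" "cop_wins_within k (C m) (r m)"
      "\<forall>i\<in>{1..m}. cop_step E 1 (c (i - 1)) (c i)" for k m
    using that
  proof (induction k arbitrary: m rule: less_induct)
    case (less k m)
    have legal: "\<forall>i\<in>{1..Suc m}. cop_step E 1 (c (i - 1)) (c i)"
      if "C (Suc m) = C m \<or> E (C m) (C (Suc m))"
      using less.prems(3) that by (auto simp: c_C cop_step_def le_Suc_eq)
    show ?case
    proof (cases "C m = r m \<or> E (C m) (r m)")
      case True
      then have "C (Suc m) = r m" using C_Suc cop_move_def by simp
      with True legal show ?thesis by (intro exI[of _ "Suc m"]) (auto simp: c_C)
    next
      case False
      note move = cop_move_spec[OF less.prems(2) False]
      have legal': "\<forall>i\<in>{1..Suc m}. cop_step E 1 (c (i - 1)) (c i)"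
        using legal move(1) C_Suc by simp
      show ?thesis
      proof (cases "robber_step E {C (Suc m)} (r m) (r (Suc m))")
        case False
        with legal' img show ?thesis by (intro exI[of _ "Suc m"]) auto
      next
        case True
        then have "reach (V - {C (Suc m)}) (r m) (r (Suc m))" by (simp add: robber_step_singleton_iff)
        then have "reach (V - {cop_move (C m) (r m)}) (r m) (r (Suc m))" by (simp add: C_Suc)
        from move(3)[OF this] less.prems(1)
        have "cop_wins_within (capture_time (C (Suc m)) (r (Suc m))) (C (Suc m)) (r (Suc m))"
          and "capture_time (C (Suc m)) (r (Suc m)) < k" by (simp_all add: C_Suc)
        then show ?thesis using less.IH[OF _ refl _ legal'] by blast
      qed
    qed
  qed
  moreover obtain n where "cop_wins_within n c0 (r 0)" using cop_wins_at_within wins r0 by blast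
  then have "cop_wins_within (capture_time (C 0) (r 0)) (C 0) (r 0)"
    unfolding capture_time_def C_def by (auto intro: LeastI)
  ultimately have ?ends by simp
  then show "let c = \<lambda>n. if n = 0 then \<lambda>_. c0 else (\<lambda>h _. foldl cop_move c0 h) (map r [0..<n]) in
       \<exists>n\<ge>1. (\<forall>m\<in>{1..n}. cop_step E 1 (c (m - 1)) (c m)) \<and>
         ((\<exists>i<1. c n i = r (n - 1)) \<or> \<not> robber_step E (c n ` {..<1}) (r (n - 1)) (r n))"
    unfolding Let_def c_def C_def .
qed

end

section \<open>Strategies for the robber\<close>

context finite_graph
begin

lemma block_vertex_far_from:
  assumes B: "block B" and nd: "\<not> dom_number_one E B" and c: "c \<in> V"
  shows "\<exists>r\<in>B. r \<noteq> c \<and> \<not> E c r"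
proof (cases "c \<in> B")
  case True
  then show ?thesis using nd unfolding dom_number_one_def by blast
next
  case False
  obtain b1 where b1: "b1 \<in> B" using block_nonempty[OF B] by blast
  obtain b2 where b2: "b2 \<in> B" "b2 \<noteq> b1"
    using nonseparable_other_vertex[OF block_nonseparable[OF B] b1] by blast
  have "\<not> E c b1 \<or> \<not> E c b2" using block_outside_neighbour_unique[OF B False b1 b2(1)] b2(2) by blast
  moreover have "b1 \<noteq> c" "b2 \<noteq> c" using b1 b2(1) False by auto
  ultimately show ?thesis using b1 b2(1) by auto
qed

lemma not_cops_win_1_if_not_dominated:
  assumes B: "block B" and nd: "\<not> dom_number_one E B"
  shows "\<not> cops_win V E 1"
proof (rule not_cops_win_1_if_robber_invariant[where Inv = "\<lambda>c r. c \<in> V \<and> r \<in> B \<and> r \<noteq> c \<and> \<not> E c r"])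
  fix c assume "c \<in> V"
  then show "\<exists>r. c \<in> V \<and> r \<in> B \<and> r \<noteq> c \<and> \<not> E c r" using block_vertex_far_from[OF B nd] by blast
next
  fix c r c' assume I: "c \<in> V \<and> r \<in> B \<and> r \<noteq> c \<and> \<not> E c r" and move: "c' = c \<or> E c c'"
  then have c'V: "c' \<in> V" and rc': "r \<noteq> c'" using edge_in_V by auto
  obtain r' where r': "r' \<in> B" "r' \<noteq> c'" "\<not> E c' r'" using block_vertex_far_from[OF B nd c'V] by blast
  have "reach (B - {c'}) r r'" using block_remove_reach[OF B] I r' rc' by blast
  moreover have "B - {c'} \<subseteq> V - {c'}" using B block_subset by blast
  ultimately have "reach (V - {c'}) r r'" by (rule reach_mono)
  then show "\<exists>r'. reach (V - {c'}) r r' \<and> c' \<in> V \<and> r' \<in> B \<and> r' \<noteq> c' \<and> \<not> E c' r'"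
    using r' c'V by blast
qed (use B block_subset in auto)

lemma hole_safe:
  assumes B: "block B" and a: "a \<in> B" and w: "w \<in> B" "w \<noteq> a" "\<not> E a w"
    and c: "c \<notin> component (V - {a}) w"
  shows "c \<noteq> w \<and> \<not> E c w"
proof -
  have wV: "w \<in> V - {a}" using w B block_subset by blast
  have "\<not> E c w" if "c \<noteq> a"
  proof
    assume "E c w"
    then have "c \<in> V - {a}" using that edge_in_V by blast
    with \<open>E c w\<close> have "c \<in> component (V - {a}) w"
      using component_edge[OF component_self edge_sym _ wV] by blast
    with c show False ..
  qed
  then show ?thesis using c component_self w(3) by blast
qed

lemma hallway_components_disjoint:
  assumes B: "block B" and B': "block B'" and u: "u \<in> B" and u': "u' \<in> B'"
    and w: "w \<in> B" "w \<noteq> u" and w': "w' \<in> B'" "w' \<noteq> u'"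
    and sep: "B' \<inter> component (V - {u}) w = {}" and sep': "B \<inter> component (V - {u'}) w' = {}"
  shows "component (V - {u}) w \<inter> component (V - {u'}) w' = {}"
proof (cases "u = u'")
  case True
  then show ?thesis using sep w' component_disjoint component_self by blast
next
  case False
  define S S' where "S = component (V - {u}) w" and "S' = component (V - {u'}) w'"
  have "w \<in> V - {u}" using w B block_subset by blast
  have "B - {u} \<subseteq> S" unfolding S_def
    using connected_subset_component[OF nonseparable_remove[OF block_nonseparable[OF B]], of u]
      w B block_subset component_self by blast
  then have u'B: "u' \<notin> B" using sep u' False unfolding S_def by blast
  show ?thesis
  proof (rule ccontr)
    assume "component (V - {u}) w \<inter> component (V - {u'}) w' \<noteq> {}"
    then obtain z where z: "z \<in> S" "z \<in> S'" unfolding S_def S'_def by blast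
    have "reach (V - {u}) w z" using z(1) unfolding S_def component_def by blast
    moreover have "S \<inter> (V - {u}) \<subseteq> V - {u'}" using sep u' unfolding S_def by blast
    ultimately have wz: "reach (V - {u'}) w z" unfolding S_def by (rule reach_restrict)
    have "reach B u w" using block_nonseparable[OF B] nonseparable_connected w u
      by (auto simp: connected_on_def)
    moreover have "B \<subseteq> V - {u'}" using u'B B block_subset by blast
    ultimately have "reach (V - {u'}) u w" by (rule reach_mono)
    from this wz have "reach (V - {u'}) u z" by (rule reach_trans)
    moreover have "reach (V - {u'}) w' z" using z(2) unfolding S'_def component_def by blast
    ultimately have "u \<in> S'" unfolding S'_def component_def using reach_sym reach_trans by blast
    then show False using sep' u unfolding S'_def by blast
  qed
qed

end

context connected_finite_graph
begin

lemma reach_outside_component: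
  assumes aV: "a \<in> V" and w: "w \<in> V - {a}" and y: "y \<in> V - component (V - {a}) w"
  shows "reach (V - component (V - {a}) w) a y"
proof (rule ccontr)
  define S T where "S = component (V - {a}) w" and "T = component (V - S) a"
  assume "\<not> reach (V - component (V - {a}) w) a y"
  then have yZ: "y \<in> (V - S) - T" using y unfolding S_def T_def component_def by auto
  have aS: "a \<notin> S" using component_subset[OF w] unfolding S_def by blast
  have closed: "t \<in> (V - S) - T" if z: "z \<in> (V - S) - T" and e: "induced E V z t" for z t
  proof -
    have zt: "E z t" "t \<in> V" using e by (auto simp: induced_def)
    have "z \<noteq> a" using z component_self unfolding T_def by blast
    then have "t \<notin> S"
      using z component_edge[of t "V - {a}" w z] zt edge_sym w unfolding S_def by blast
    moreover have "t \<notin> T"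
    proof
      assume "t \<in> T"
      moreover have "reach (V - S) t z" using reach_edge[OF edge_sym[OF zt(1)]] z zt(2) \<open>t \<notin> S\<close>
        by blast
      ultimately have "z \<in> T" unfolding T_def component_def using reach_trans by blast
      with z show False by blast
    qed
    ultimately show ?thesis using zt by blast
  qed
  have "reach V y a" using connected y aV by blast
  then have "a \<in> (V - S) - T" using yZ closed by (rule reach_closed)
  then show False using component_self unfolding T_def by blast
qed

text \<open>A cop entering the component of G - a containing w comes from a, which is not adjacent to w;
  so the robber at w can escape through a to anywhere outside this component.\<close>

lemma hole_escape:
  assumes B: "block B" and a: "a \<in> B" and w: "w \<in> B" "w \<noteq> a" "\<not> E a w"
    and w': "w' \<in> V - component (V - {a}) w"
    and c: "c \<notin> component (V - {a}) w" and c': "c' \<in> component (V - {a}) w" and e: "E c c'"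
  shows "reach (V - {c'}) w w'"
proof -
  define S where "S = component (V - {a}) w"
  have wV: "w \<in> V - {a}" using w B block_subset by blast
  have ca: "c = a"
    using c c' e edge_sym edge_in_V wV component_edge[of c' "V - {a}" w c] unfolding S_def by blast
  have c'a: "c' \<noteq> a" using component_subset[OF wV] c' by blast
  have c'w: "c' \<noteq> w" using e ca w(3) by blast
  have "reach (B - {c'}) w a" using block_remove_reach[OF B w(1) a c'w[symmetric]] c'a by blast
  moreover have "B - {c'} \<subseteq> V - {c'}" using B block_subset by blast
  ultimately have "reach (V - {c'}) w a" by (rule reach_mono)
  moreover have "reach (V - S) a w'"
    using reach_outside_component[OF _ wV w'] a B block_subset unfolding S_def by blast
  then have "reach (V - {c'}) a w'" using c' unfolding S_def by (blast intro: reach_mono)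
  ultimately show ?thesis by (rule reach_trans)
qed

lemma hole_respond:
  assumes B: "block B" and a: "a \<in> B" and w: "w \<in> B" "w \<noteq> a" "\<not> E a w"
    and w': "w' \<in> V - component (V - {a}) w" and c: "c \<notin> component (V - {a}) w"
    and move: "c' = c \<or> E c c'"
  shows "c' \<notin> component (V - {a}) w \<or> reach (V - {c'}) w w'"
  using hole_escape[OF B a w w' c _ ] move c by blast

lemma not_cops_win_1_if_hallway:
  assumes "has_hallway V E"
  shows "\<not> cops_win V E 1"
proof -
  obtain B B' p u uk where B: "block B" and B': "block B'" and BB': "B \<noteq> B'"
    and p: "block_tree_path V E p (Inl B) (Inl B')" and p1: "p ! 1 = Inr u"
    and pk: "p ! (length p - 2) = Inr uk"
    and h: "directed_hole V E B u" and h': "directed_hole V E B' uk"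
    using assms unfolding has_hallway_def is_hallway_def is_block_iff_block by blast
  obtain w where w: "w \<in> B" "w \<noteq> u" "\<not> E u w" and u: "u \<in> B"
    using h unfolding directed_hole_def by blast
  obtain w' where w': "w' \<in> B'" "w' \<noteq> uk" "\<not> E uk w'" and uk: "uk \<in> B'"
    using h' unfolding directed_hole_def by blast
  define S S' where "S = component (V - {u}) w" and "S' = component (V - {uk}) w'"
  obtain C q where "p = Inl B # Inr u # Inl C # q"
    using block_tree_path_from_block[OF p BB' p1] .
  then have "length p \<ge> 2" by simp
  then have "rev p ! 1 = Inr uk" using pk by (simp add: rev_nth numeral_2_eq_2)
  from block_tree_path_separates[OF B' _ block_tree_path_rev[OF p] this w'(1,2)] BB'
  have sep': "B \<inter> S' = {}" unfolding S'_def by blast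
  have sep: "B' \<inter> S = {}" unfolding S_def using block_tree_path_separates[OF B BB' p p1 w(1,2)] .
  have disj: "S \<inter> S' = {}"
    using hallway_components_disjoint[OF B B' u uk w(1,2) w'(1,2)] sep sep'
    unfolding S_def S'_def by blast
  have ends: "w \<in> V - S'" "w' \<in> V - S"
    using w w' B B' block_subset disj component_self unfolding S_def S'_def by blast+
  show ?thesis
  proof (rule not_cops_win_1_if_robber_invariant[where
        Inv = "\<lambda>c r. c \<in> V \<and> ((r = w \<and> c \<notin> S) \<or> (r = w' \<and> c \<notin> S'))"])
    fix c r c' assume I: "c \<in> V \<and> ((r = w \<and> c \<notin> S) \<or> (r = w' \<and> c \<notin> S'))"
      and move: "c' = c \<or> E c c'"
    have c'V: "c' \<in> V" and stay: "reach (V - {c'}) r r" using move I edge_in_V by auto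
    from I consider (at_w) "r = w" "c \<notin> S" | (at_w') "r = w'" "c \<notin> S'" by blast
    then show "\<exists>r'. reach (V - {c'}) r r' \<and> c' \<in> V \<and> ((r' = w \<and> c' \<notin> S) \<or> (r' = w' \<and> c' \<notin> S'))"
    proof cases
      case at_w
      then have "c' \<notin> S \<or> reach (V - {c'}) w w'"
        using hole_respond[OF B u w, of w' c c'] ends move unfolding S_def by blast
      then show ?thesis using at_w c'V stay disj by blast
    next
      case at_w'
      then have "c' \<notin> S' \<or> reach (V - {c'}) w' w"
        using hole_respond[OF B' uk w', of w c c'] ends move unfolding S'_def by blast
      then show ?thesis using at_w' c'V stay disj by blast
    qed
  next
    fix c assume "c \<in> V"
    then show "\<exists>r. c \<in> V \<and> ((r = w \<and> c \<notin> S) \<or> (r = w' \<and> c \<notin> S'))" using disj by blast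
  next
    fix c r assume "c \<in> V \<and> ((r = w \<and> c \<notin> S) \<or> (r = w' \<and> c \<notin> S'))"
    then show "c \<noteq> r \<and> \<not> E c r"
      using hole_safe[OF B u w, of c] hole_safe[OF B' uk w', of c] unfolding S_def S'_def by blast
  next
    fix c r assume "c \<in> V \<and> ((r = w \<and> c \<notin> S) \<or> (r = w' \<and> c \<notin> S'))"
    then show "r \<in> V" using ends by blast
  qed
qed

end

section \<open>A strategy for the cop\<close>

context finite_graph
begin

lemma cop_wins_at_step:
  "E v g \<Longrightarrow> g \<noteq> r \<Longrightarrow> (\<And>r'. r' \<in> component (V - {g}) r \<Longrightarrow> cop_wins_at g r') \<Longrightarrow> cop_wins_at v r"
  by (rule cop_wins_at.move) (auto simp: component_def)

lemma block_minus_subset_component: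
  assumes B: "block B" and y: "y \<in> B" "y \<noteq> z" "y \<in> component (V - {z}) x"
  shows "B - {z} \<subseteq> component (V - {z}) x"
  using connected_subset_component[OF nonseparable_remove[OF block_nonseparable[OF B]], of z]
    B block_subset y by blast

lemma component_subset_component:
  assumes "v \<notin> component (V - {g}) r"
  shows "component (V - {g}) r \<subseteq> component (V - {v}) r"
proof
  fix x assume "x \<in> component (V - {g}) r"
  then have "reach (V - {g}) r x" by (simp add: component_def)
  moreover have "component (V - {g}) r \<inter> (V - {g}) \<subseteq> V - {v}" using assms by blast
  ultimately have "reach (V - {v}) r x" by (rule reach_restrict)
  then show "x \<in> component (V - {v}) r" by (simp add: component_def)
qed

lemma card_component_less:
  assumes r: "r \<in> V - {g}" and g: "g \<in> component (V - {v}) r" and v: "v \<notin> component (V - {g}) r"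
  shows "card (component (V - {g}) r) < card (component (V - {v}) r)"
proof (rule psubset_card_mono)
  show "finite (component (V - {v}) r)" by (rule component_finite) blast
  have "g \<notin> component (V - {g}) r" using component_subset[OF r] by blast
  then show "component (V - {g}) r \<subset> component (V - {v}) r"
    using component_subset_component[OF v] g by blast
qed

end

context connected_finite_graph
begin

lemma neighbour_in_component:
  assumes v: "v \<in> V" and r: "r \<in> V - {v}"
  shows "\<exists>y\<in>component (V - {v}) r. E v y"
proof (rule ccontr)
  define D where "D = component (V - {v}) r"
  assume "\<not> (\<exists>y\<in>component (V - {v}) r. E v y)"
  then have no: "\<not> E v y" if "y \<in> D" for y using that unfolding D_def by blast
  have DV: "D \<subseteq> V - {v}" unfolding D_def using component_subset[OF r] .
  have "reach V r v" using connected r v by blast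
  then have "v \<in> D"
  proof (rule reach_closed)
    show "r \<in> D" unfolding D_def by (rule component_self)
  next
    fix u t assume u: "u \<in> D" and "induced E V u t"
    then have ut: "E u t" "t \<in> V" by (auto simp: induced_def)
    with u no have "t \<noteq> v" using edge_sym by blast
    with ut u r show "t \<in> D" unfolding D_def using component_edge by blast
  qed
  with DV show False by blast
qed

lemma gate_move:
  assumes v: "v \<in> V" and r: "r \<in> V" "r \<noteq> v" "\<not> E v r"
    and B: "block B" "v \<in> B" and y: "y \<in> B" "y \<noteq> v" "y \<in> component (V - {v}) r"
    and dom: "\<forall>z\<in>B. z \<noteq> v \<longrightarrow> E v z"
  obtains g where "g \<in> B" "E v g" "g \<noteq> r" "r \<in> V - {g}" "component (V - {g}) r \<inter> B = {}"
    "component (V - {g}) r \<subseteq> component (V - {v}) r"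
    "card (component (V - {g}) r) < card (component (V - {v}) r)"
proof -
  have rB: "r \<notin> B" using dom r by blast
  obtain g where g: "g \<in> B" "reach (V - (B - {g})) r g" "component (V - {g}) r \<inter> B = {}"
    using block_gate[OF B(1) r(1) rB] by blast
  have "y \<notin> component (V - {g}) r" using g(3) y(1) by blast
  then have gv: "g \<noteq> v" using y(3) by blast
  have gr: "g \<noteq> r" using g(1) rB by blast
  have vD': "v \<notin> component (V - {g}) r" using g(3) B(2) by blast
  have "B - {v} \<subseteq> component (V - {v}) r"
    using block_minus_subset_component[OF B(1) y] .
  then have "g \<in> component (V - {v}) r" using g(1) gv by blast
  then show thesis
    using that[OF g(1) _ gr _ g(3)] dom g(1) gv r(1) gr
      component_subset_component[OF vD'] card_component_less[OF _ _ vD'] by blast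
qed

end

context connected_finite_graph
begin

definition tree_adj_avoiding :: "'a set set \<Rightarrow> 'a set + 'a \<Rightarrow> 'a set + 'a \<Rightarrow> bool" where
  "tree_adj_avoiding F X Y \<longleftrightarrow> block_tree_adj V E X Y \<and> X \<notin> Inl ` F \<and> Y \<notin> Inl ` F"

lemma tree_walk_extend:
  assumes C: "block C" "t \<in> C" "C \<notin> F" and walk: "(tree_adj_avoiding F)\<^sup>*\<^sup>* X (Inl C)"
    and e: "E t t'" and avoid: "\<And>C'. block C' \<Longrightarrow> t \<in> C' \<Longrightarrow> t' \<in> C' \<Longrightarrow> C' \<notin> F"
  obtains C' where "block C'" "t' \<in> C'" "C' \<notin> F" "(tree_adj_avoiding F)\<^sup>*\<^sup>* X (Inl C')"
proof -
  obtain C' where C': "block C'" "t \<in> C'" "t' \<in> C'" using edge_in_block[OF e] .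
  have C'F: "C' \<notin> F" using avoid C' by blast
  show thesis
  proof (cases "C = C'")
    case True
    then show ?thesis using that C' C'F walk by blast
  next
    case False
    have "cut_vertex V E t" by (rule cut_vertex_if_two_blocks[OF C(1) C'(1) False C(2) C'(2)])
    then have "tree_adj_avoiding F (Inl C) (Inr t)" "tree_adj_avoiding F (Inr t) (Inl C')"
      using C C' C'F
      by (auto simp: tree_adj_avoiding_def block_tree_adj_Inl_Inr block_tree_adj_Inr_Inl
          is_block_iff_block)
    with walk have "(tree_adj_avoiding F)\<^sup>*\<^sup>* X (Inl C')"
      by (meson rtranclp.rtrancl_into_rtrancl)
    then show ?thesis using that C' C'F by blast
  qed
qed

lemma tree_walk_along:
  assumes walk: "reach S z t"
    and C: "block C" "z \<in> C" "C \<notin> F" "(tree_adj_avoiding F)\<^sup>*\<^sup>* X (Inl C)"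
    and avoid: "\<And>C x y. block C \<Longrightarrow> x \<in> C \<Longrightarrow> y \<in> C \<Longrightarrow> E x y \<Longrightarrow> x \<in> S \<Longrightarrow> y \<in> S \<Longrightarrow> C \<notin> F"
  obtains C' where "block C'" "t \<in> C'" "C' \<notin> F" "(tree_adj_avoiding F)\<^sup>*\<^sup>* X (Inl C')"
proof -
  from walk have "\<exists>C'. block C' \<and> t \<in> C' \<and> C' \<notin> F \<and> (tree_adj_avoiding F)\<^sup>*\<^sup>* X (Inl C')"
  proof (induction rule: rtranclp_induct)
    case base
    then show ?case using C by blast
  next
    case (step t t')
    then obtain C' where C': "block C'" "t \<in> C'" "C' \<notin> F" "(tree_adj_avoiding F)\<^sup>*\<^sup>* X (Inl C')"
      by blast
    have e: "E t t'" "t \<in> S" "t' \<in> S" using step(2) by (auto simp: induced_def)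
    obtain C'' where "block C''" "t' \<in> C''" "C'' \<notin> F" "(tree_adj_avoiding F)\<^sup>*\<^sup>* X (Inl C'')"
      using tree_walk_extend[OF C' e(1)] avoid e by blast
    then show ?case by blast
  qed
  then show thesis using that by blast
qed

lemma hallway_if_tree_walk:
  assumes BB': "B \<noteq> B'" and h: "directed_hole V E B v" and h': "directed_hole V E B' a"
    and walk: "(tree_adj_avoiding {B, B'})\<^sup>*\<^sup>* (Inr v) (Inr a)"
  shows "is_hallway V E B B'"
proof -
  obtain q where q: "q \<noteq> []" "hd q = Inr v" "last q = Inr a" "distinct q"
    "successively (tree_adj_avoiding {B, B'}) q"
    using walk by (rule rtranclp_imp_distinct_path)
  have q_avoids: "Inl B \<notin> set q" "Inl B' \<notin> set q"
    using successively_in_set_hd_or_pred[OF q(5)] q(2) unfolding tree_adj_avoiding_def by force+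
  have "successively (block_tree_adj V E) q"
    using q(5) by (rule successively_mono) (simp add: tree_adj_avoiding_def)
  moreover have "block_tree_adj V E (Inl B) (Inr v)" "block_tree_adj V E (Inr a) (Inl B')"
    using h h' unfolding directed_hole_def block_tree_adj_def by blast+
  ultimately have "successively (block_tree_adj V E) (q @ [Inl B'])"
    "block_tree_adj V E (Inl B) (hd (q @ [Inl B']))"
    using q(1-3) by (simp_all add: successively_append_iff)
  then have "successively (block_tree_adj V E) (Inl B # q @ [Inl B'])"
    by (simp add: successively_Cons)
  then have path: "block_tree_path V E (Inl B # q @ [Inl B']) (Inl B) (Inl B')"
    unfolding block_tree_path_def using q(4) q_avoids BB' by auto
  have "(Inl B # q @ [Inl B']) ! 1 = Inr v" using q(1,2) by (cases q) simp_all
  moreover have "(Inl B # q @ [Inl B']) ! (length (Inl B # q @ [Inl B']) - 2) = Inr a"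
    using q(1,3) by (cases q rule: rev_cases) (simp_all add: nth_append)
  moreover have "is_block V E B" "is_block V E B'"
    using h h' unfolding directed_hole_def by blast+
  ultimately show ?thesis unfolding is_hallway_def using path BB' h h' by blast
qed

text \<open>A walk from v to a through the robber's side avoids B and meets B' only at a; in the block
  tree it becomes a walk avoiding B and B'.\<close>

lemma tree_walk_to_attachment:
  assumes disj: "component (V - {v}) r \<inter> B = {}" and cut_v: "cut_vertex V E v"
    and B': "block B'" "B' \<inter> component (V - {v}) r \<noteq> {}"
    and a: "a \<in> B'" "a \<noteq> v" "component (V - {a}) v \<inter> B' = {}" and cut_a: "cut_vertex V E a"
  shows "(tree_adj_avoiding {B, B'})\<^sup>*\<^sup>* (Inr v) (Inr a)"
proof -
  define D where "D = component (V - {v}) r"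
  have vV: "v \<in> V" using cut_v unfolding cut_vertex_def by blast
  have vB': "v \<notin> B'" using a(3) component_self by blast
  then have "B' \<subseteq> V - {v}" using B' block_subset by blast
  then have "B' \<subseteq> D" using connected_subset_component[OF nonseparable_connected[OF
        block_nonseparable[OF B'(1)]]] B'(2) unfolding D_def by blast
  then have aD: "a \<in> D" using a(1) by blast
  obtain g where g: "g \<in> B'" "reach (V - (B' - {g})) v g" "component (V - {g}) v \<inter> B' = {}"
    using block_gate[OF B'(1) vV vB'] .
  have "g = a"
  proof (rule ccontr)
    assume "g \<noteq> a"
    then have "V - (B' - {g}) \<subseteq> V - {a}" using a(1) by blast
    with g(2) have "reach (V - {a}) v g" by (rule reach_mono)
    then show False using g(1) a(3) by (auto simp: component_def)
  qed
  define S where "S = V - (B' - {a}) - {v}"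
  from reach_first_entry[OF reach_sym[OF g(2)[unfolded \<open>g = a\<close>]], of "{v}"] a(2)
  obtain z where z: "reach S a z" "E z v" unfolding S_def by blast
  have "reach (V - {v}) a z" using z(1) by (rule reach_mono) (auto simp: S_def)
  then have zD: "z \<in> D" using aD unfolding D_def component_def using reach_trans by blast
  have "component S z \<subseteq> D"
  proof
    fix x assume "x \<in> component S z"
    then have "reach (V - {v}) z x" unfolding component_def by (rule_tac reach_mono) (auto simp: S_def)
    with zD show "x \<in> D" unfolding D_def component_def using reach_trans by blast
  qed
  then have walk: "reach (S \<inter> D) z a"
    using reach_within_component[OF reach_sym[OF z(1)]] by (rule_tac reach_mono) auto
  obtain C0 where C0: "block C0" "v \<in> C0" "z \<in> C0" using edge_in_block[OF edge_sym[OF z(2)]] .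
  have C0F: "C0 \<notin> {B, B'}" using C0 zD disj vB' unfolding D_def by blast
  then have "tree_adj_avoiding {B, B'} (Inr v) (Inl C0)"
    using C0 cut_v by (simp add: tree_adj_avoiding_def block_tree_adj_Inr_Inl is_block_iff_block)
  then have start: "(tree_adj_avoiding {B, B'})\<^sup>*\<^sup>* (Inr v) (Inl C0)" by blast
  obtain C where C: "block C" "a \<in> C" "C \<notin> {B, B'}" "(tree_adj_avoiding {B, B'})\<^sup>*\<^sup>* (Inr v) (Inl C)"
  proof (rule tree_walk_along[OF walk C0(1,3) C0F start])
    fix C x y assume "block C" "x \<in> C" "y \<in> C" "E x y" "x \<in> S \<inter> D" "y \<in> S \<inter> D"
    then show "C \<notin> {B, B'}" using disj edge_irrefl unfolding S_def D_def by blast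
  qed
  then have "tree_adj_avoiding {B, B'} (Inl C) (Inr a)"
    using cut_a by (simp add: tree_adj_avoiding_def block_tree_adj_Inl_Inr is_block_iff_block)
  with C(4) show ?thesis by (rule rtranclp.rtrancl_into_rtrancl)
qed

text \<open>The condition on a singles out the vertex of B through which v sees B: a = v if v \<in> B, and
  otherwise the gate of B for v, which separates v from B - {a}.\<close>

definition dominated_from :: "'a \<Rightarrow> 'a \<Rightarrow> bool" where
  "dominated_from v r \<longleftrightarrow> (\<forall>B a. block B \<longrightarrow> B \<inter> component (V - {v}) r \<noteq> {} \<longrightarrow> a \<in> B \<longrightarrow>
     (a = v \<or> component (V - {a}) v \<inter> B = {}) \<longrightarrow> (\<forall>z\<in>B. z \<noteq> a \<longrightarrow> E a z))"

lemma dominated_fromD: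
  "dominated_from v r \<Longrightarrow> block B \<Longrightarrow> B \<inter> component (V - {v}) r \<noteq> {} \<Longrightarrow> a \<in> B \<Longrightarrow>
    a = v \<or> component (V - {a}) v \<inter> B = {} \<Longrightarrow> z \<in> B \<Longrightarrow> z \<noteq> a \<Longrightarrow> E a z"
  unfolding dominated_from_def by blast

lemma dominated_from_if_hole:
  assumes nh: "\<not> has_hallway V E" and B: "block B" "v \<in> B" and w: "w \<in> B" "w \<noteq> v" "\<not> E v w"
    and r: "r \<in> V - {v}" and disj: "component (V - {v}) r \<inter> B = {}"
  shows "dominated_from v r"
  unfolding dominated_from_def
proof (intro allI impI ballI)
  fix B' a z
  assume B': "block B'" "B' \<inter> component (V - {v}) r \<noteq> {}" and a: "a \<in> B'"
    and att: "a = v \<or> component (V - {a}) v \<inter> B' = {}" and z: "z \<in> B'" "z \<noteq> a"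
  show "E a z"
  proof (rule ccontr)
    assume "\<not> E a z"
    have vV: "v \<in> V" using B block_subset by blast
    have "w \<notin> component (V - {v}) r" using disj w(1) by blast
    then have cut_v: "cut_vertex V E v"
      using vV r w B block_subset reach_sym unfolding cut_vertex_def component_def by blast
    have cut_a: "cut_vertex V E a"
    proof (cases "a = v")
      case False
      with att have "z \<notin> component (V - {a}) v" using z by blast
      then show ?thesis
        using False vV z a B' block_subset unfolding cut_vertex_def component_def by blast
    qed (use cut_v in simp)
    have BB': "B \<noteq> B'" using B'(2) disj by blast
    have "(tree_adj_avoiding {B, B'})\<^sup>*\<^sup>* (Inr v) (Inr a)"
      using tree_walk_to_attachment[OF disj cut_v B' a _ _ cut_a] att by (cases "a = v") auto
    then have "is_hallway V E B B'"
      using BB' B B' a z \<open>\<not> E a z\<close> w cut_v cut_a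
      by (intro hallway_if_tree_walk) (auto simp: directed_hole_def is_block_iff_block)
    with nh show False unfolding has_hallway_def by blast
  qed
qed

text \<open>Moving to a neighbour g with the robber beyond g does not change the vertex through which the
  cop sees the blocks on the robber's side.\<close>

lemma dominated_from_step:
  assumes dom: "dominated_from v r" and g: "E v g" "r \<in> V - {g}"
    and vD': "v \<notin> component (V - {g}) r" and r': "r' \<in> component (V - {g}) r"
  shows "dominated_from g r'"
  unfolding dominated_from_def
proof (intro allI impI)
  fix B a
  assume B: "block B" "B \<inter> component (V - {g}) r' \<noteq> {}" and a: "a \<in> B"
    and att: "a = g \<or> component (V - {a}) g \<inter> B = {}"
  define D' where "D' = component (V - {g}) r"
  have eq: "component (V - {g}) r' = D'" unfolding D'_def by (rule component_eq[OF r'])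
  then obtain b where b: "b \<in> B" "b \<in> D'" using B(2) by blast
  have bg: "b \<noteq> g" using b(2) component_subset[OF g(2)] unfolding D'_def by blast
  have sub: "B - {g} \<subseteq> D'" unfolding D'_def using block_minus_subset_component[OF B(1) b(1) bg b(2)[unfolded D'_def]] .
  have vB: "v \<notin> B" using sub vD' g(1) edge_irrefl unfolding D'_def by blast
  have meet: "B \<inter> component (V - {v}) r \<noteq> {}"
    using b component_subset_component[OF vD'] unfolding D'_def by blast
  have "a = v \<or> component (V - {a}) v \<inter> B = {}"
  proof (cases "a = g")
    case True
    have vg: "v \<in> V - {g}" using g(1) edge_in_V edge_irrefl by blast
    have "component (V - {g}) v \<inter> B = {}"
    proof (rule ccontr)
      assume "component (V - {g}) v \<inter> B \<noteq> {}"
      then obtain x where x: "x \<in> component (V - {g}) v" "x \<in> B" by blast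
      then have "x \<in> D'" using sub component_subset[OF vg] by blast
      then have "v \<in> D'"
        using component_eq[OF x(1)] component_eq[of x "V - {g}" r] component_self
        unfolding D'_def by blast
      with vD' show False unfolding D'_def by blast
    qed
    then show ?thesis using True by simp
  next
    case False
    with att have cmp: "component (V - {a}) g \<inter> B = {}" by blast
    have "a \<noteq> v" using a vB by blast
    then have "g \<in> component (V - {a}) v"
      using reach_edge[OF g(1)] False edge_in_V[OF g(1)] by (auto simp: component_def)
    then show ?thesis using cmp component_eq by blast
  qed
  then show "\<forall>z\<in>B. z \<noteq> a \<longrightarrow> E a z" using dominated_fromD[OF dom B(1) meet a] by blast
qed

end

context connected_finite_graph
begin

lemma cop_wins_at_if_dominated_from:
  assumes "v \<in> V" "r \<in> V" "dominated_from v r"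
  shows "cop_wins_at v r"
  using assms
proof (induction "card (component (V - {v}) r)" arbitrary: v r rule: less_induct)
  case less
  show ?case
  proof (cases "v = r \<or> E v r")
    case True
    then show ?thesis by (rule cop_wins_at.capture)
  next
    case False
    then have rv: "r \<in> V - {v}" using less.prems(2) by blast
    obtain y where y: "y \<in> component (V - {v}) r" "E v y"
      using neighbour_in_component[OF less.prems(1) rv] by blast
    obtain B where B: "block B" "v \<in> B" "y \<in> B" using edge_in_block[OF y(2)] .
    have "\<forall>z\<in>B. z \<noteq> v \<longrightarrow> E v z" using dominated_fromD[OF less.prems(3) B(1) _ B(2)] y(1) B(3) by blast
    then obtain g where g: "g \<in> B" "E v g" "g \<noteq> r" "r \<in> V - {g}" "component (V - {g}) r \<inter> B = {}"
      and card: "card (component (V - {g}) r) < card (component (V - {v}) r)"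
      using gate_move[OF less.prems(1,2) _ _ B(1,2,3) _ y(1)] False y(2) edge_irrefl by metis
    have vD': "v \<notin> component (V - {g}) r" using g(5) B(2) by blast
    show ?thesis
    proof (rule cop_wins_at_step[OF g(2,3)])
      fix r' assume r': "r' \<in> component (V - {g}) r"
      have "r' \<in> V" "g \<in> V" using component_subset[OF g(4)] r' g(2) edge_in_V by blast+
      moreover have "card (component (V - {g}) r') < card (component (V - {v}) r)"
        using card component_eq[OF r'] by simp
      moreover have "dominated_from g r'"
        by (rule dominated_from_step[OF less.prems(3) g(2,4) vD' r'])
      ultimately show "cop_wins_at g r'" using less.hyps by blast
    qed
  qed
qed

text \<open>The cop moves from x \<in> B to the gate g of B for the robber. If g = v, then (B, v) is a
  directed hole separating the robber from B, and since there is no hallway, all blocks beyond v are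
  dominated from v. Otherwise the robber's component in G - g lies inside the one in G - v.\<close>

lemma cop_wins_at_via_gate:
  assumes nh: "\<not> has_hallway V E" and v: "v \<in> V" and B: "block B" "v \<in> B"
    and w: "w \<in> B" "w \<noteq> v" "\<not> E v w"
    and BD: "B - {v} \<subseteq> component (V - {v}) r"
    and g: "g \<in> B" "E x g" "reach (V - (B - {g})) r' g" "component (V - {g}) r' \<inter> B = {}"
    and r': "r' \<in> V" "r' \<notin> B"
    and IH: "\<And>v' r'. v' \<in> V \<Longrightarrow> r' \<in> V \<Longrightarrow>
      card (component (V - {v'}) r') < card (component (V - {v}) r) \<Longrightarrow> cop_wins_at v' r'"
  shows "cop_wins_at x r'"
proof (rule cop_wins_at_step[OF g(2)])
  show gr': "g \<noteq> r'" using g(1) r'(2) by blast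
  fix r'' assume r'': "r'' \<in> component (V - {g}) r'"
  have r'g: "r' \<in> V - {g}" using r'(1) gr' by blast
  have eq: "component (V - {g}) r'' = component (V - {g}) r'" using r'' by (rule component_eq)
  have r''V: "r'' \<in> V - {g}" using component_subset[OF r'g] r'' by blast
  show "cop_wins_at g r''"
  proof (cases "g = v")
    case True
    then have "component (V - {v}) r'' \<inter> B = {}" using eq g(4) by simp
    then have "dominated_from v r''" using dominated_from_if_hole[OF nh B w] r''V True by blast
    then show ?thesis using cop_wins_at_if_dominated_from v r''V True by blast
  next
    case False
    define D where "D = component (V - {v}) r"
    have "V - (B - {g}) \<subseteq> V - {v}" using B(2) False by blast
    with g(3) have "reach (V - {v}) r' g" by (rule reach_mono)
    moreover have "g \<in> D" using BD g(1) False unfolding D_def by blast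
    ultimately have "r' \<in> D" unfolding D_def component_def using reach_sym reach_trans by blast
    then have D_eq: "component (V - {v}) r' = D" unfolding D_def by (rule component_eq)
    have "v \<notin> component (V - {g}) r'" using g(4) B(2) by blast
    moreover have "g \<in> component (V - {v}) r'" using \<open>g \<in> D\<close> D_eq by simp
    ultimately have "card (component (V - {g}) r') < card D"
      using card_component_less[OF r'g] D_eq by metis
    then have "card (component (V - {g}) r'') < card D" using eq by simp
    moreover have "g \<in> V" using g(1) B(1) block_subset by blast
    ultimately show ?thesis using IH r''V unfolding D_def by blast
  qed
qed

lemma cop_wins_at_via_dominator:
  assumes nh: "\<not> has_hallway V E" and v: "v \<in> V" and r: "r \<in> V - {v}" "\<not> E v r"
    and B: "block B" "v \<in> B" and y: "y \<in> B" "y \<noteq> v" "y \<in> component (V - {v}) r"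
    and x: "x \<in> B" "\<forall>z\<in>B. z \<noteq> x \<longrightarrow> E x z" and w: "w \<in> B" "w \<noteq> v" "\<not> E v w"
    and IH: "\<And>v' r'. v' \<in> V \<Longrightarrow> r' \<in> V \<Longrightarrow>
      card (component (V - {v'}) r') < card (component (V - {v}) r) \<Longrightarrow> cop_wins_at v' r'"
  shows "cop_wins_at v r"
proof -
  have BD: "B - {v} \<subseteq> component (V - {v}) r" using block_minus_subset_component[OF B(1) y] .
  have xv: "x \<noteq> v" using x w by blast
  then have "E x v" using x(2) B(2) by auto
  then have Evx: "E v x" by (rule edge_sym)
  then have xr: "x \<noteq> r" and xV: "x \<in> V" and rx: "r \<in> V - {x}" using r edge_in_V by blast+
  show ?thesis
  proof (rule cop_wins_at_step[OF Evx xr])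
    fix r' assume r': "r' \<in> component (V - {x}) r"
    then have r'V: "r' \<in> V - {x}" using component_subset[OF rx] by blast
    show "cop_wins_at x r'"
    proof (cases "x = r' \<or> E x r'")
      case True
      then show ?thesis by (rule cop_wins_at.capture)
    next
      case False
      then have r'B: "r' \<notin> B" using x(2) by auto
      obtain g where g: "g \<in> B" "reach (V - (B - {g})) r' g" "component (V - {g}) r' \<inter> B = {}"
        using block_gate[OF B(1) _ r'B] r'V by blast
      show ?thesis
      proof (cases "g = x")
        case True
        have "v \<notin> component (V - {x}) r" using g(3) True B(2) component_eq[OF r'] by blast
        then have "card (component (V - {x}) r) < card (component (V - {v}) r)"
          using card_component_less[OF rx] BD x(1) xv by blast
        then show ?thesis using IH xV r'V component_eq[OF r'] by (metis Diff_iff)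
      next
        case False
        then have "E x g" using x(2) g(1) by blast
        with g show ?thesis
          using cop_wins_at_via_gate[OF nh v B w BD g(1) _ g(2,3) _ r'B IH] r'V by blast
      qed
    qed
  qed
qed

lemma cop_wins_at_if_blocks_dominated:
  assumes dom: "\<And>B. block B \<Longrightarrow> dom_number_one E B" and nh: "\<not> has_hallway V E"
  shows "v \<in> V \<Longrightarrow> r \<in> V \<Longrightarrow> cop_wins_at v r"
proof (induction "card (component (V - {v}) r)" arbitrary: v r rule: less_induct)
  case less
  show ?case
  proof (cases "v = r \<or> E v r")
    case True
    then show ?thesis by (rule cop_wins_at.capture)
  next
    case False
    then have rv: "r \<in> V - {v}" using less.prems(2) by blast
    obtain y where y: "y \<in> component (V - {v}) r" "E v y"
      using neighbour_in_component[OF less.prems(1) rv] by blast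
    obtain B where B: "block B" "v \<in> B" "y \<in> B" using edge_in_block[OF y(2)] .
    have yv: "y \<noteq> v" using y(2) edge_irrefl by blast
    show ?thesis
    proof (cases "\<forall>z\<in>B. z \<noteq> v \<longrightarrow> E v z")
      case True
      then obtain g where g: "E v g" "g \<noteq> r" "r \<in> V - {g}"
        and card: "card (component (V - {g}) r) < card (component (V - {v}) r)"
        using gate_move[OF less.prems _ _ B(1,2,3) yv y(1)] False by metis
      show ?thesis
      proof (rule cop_wins_at_step[OF g(1,2)])
        fix r' assume r': "r' \<in> component (V - {g}) r"
        have "r' \<in> V" "g \<in> V" using component_subset[OF g(3)] r' g(1) edge_in_V by blast+
        moreover have "card (component (V - {g}) r') < card (component (V - {v}) r)"
          using card component_eq[OF r'] by simp
        ultimately show "cop_wins_at g r'" using less.hyps by blast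
      qed
    next
      case False
      then obtain w where "w \<in> B" "w \<noteq> v" "\<not> E v w" by blast
      moreover obtain x where "x \<in> B" "\<forall>z\<in>B. z \<noteq> x \<longrightarrow> E x z"
        using dom[OF B(1)] unfolding dom_number_one_def by blast
      ultimately show ?thesis
        using cop_wins_at_via_dominator[OF nh less.prems(1) rv _ B(1,2) B(3) yv y(1)] less.hyps
          \<open>\<not> (v = r \<or> E v r)\<close> by blast
    qed
  qed
qed

end

theorem mainTheorem1:
  fixes V :: "'a set" and E :: "'a \<Rightarrow> 'a \<Rightarrow> bool"
  assumes "simple_graph V E" and "connected_graph V E"
  shows "c_inf V E = 1 \<longleftrightarrow>
           (\<forall>B. is_block V E B \<longrightarrow> dom_number_one E B) \<and> \<not> has_hallway V E"
proof -
  interpret connected_finite_graph V E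
    using assms unfolding simple_graph_def connected_graph_def connected_on_def
    by unfold_locales blast+
  obtain v where v: "v \<in> V" using assms(2) unfolding connected_graph_def connected_on_def by blast
  have "cops_win V E 1 \<longleftrightarrow> (\<forall>B. block B \<longrightarrow> dom_number_one E B) \<and> \<not> has_hallway V E"
  proof
    assume "cops_win V E 1"
    then show "(\<forall>B. block B \<longrightarrow> dom_number_one E B) \<and> \<not> has_hallway V E"
      using not_cops_win_1_if_not_dominated not_cops_win_1_if_hallway by blast
  next
    assume "(\<forall>B. block B \<longrightarrow> dom_number_one E B) \<and> \<not> has_hallway V E"
    then have "cop_wins_at v r" if "r \<in> V" for r
      using cop_wins_at_if_blocks_dominated v that by blast
    then show "cops_win V E 1" by (rule cops_win_1_if_cop_wins_at[OF v])
  qed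
  then show ?thesis using c_inf_eq_1_iff[OF finite_V v] is_block_iff_block by simp
qed

end
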